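(* Assume $\mathbf 1\in\Sigma^\circ$. Let $\mathbf x\in(\Sigma^* )^\circ$ be any vector for which $\mathbf 1\in\mathcal P(\mathbf x)^\circ$, and let $r\in(0,1/2]$. Then for every polynomial $\mathbf t\in\mathcal V$, the inclusion $\mathbf x\in\mathcal C(\mathbf t+c\mathbf 1)$ holds for every sufficiently large scalar $c$. Specifically, if $\mathbf x_1$ is the gradient certificate of $\mathbf 1$ and $\mathbf y_c$ is the gradient certificate of $\mathbf t+c\mathbf 1$, then $\mathbf x_1\in\mathcal C(\mathbf t+c\mathbf 1)$ and \[ \|c^{-1}\mathbf x_1-\mathbf y_c\|_{c^{-1}\mathbf x_1}\le r \] hold for every $c>0$ with $c\ge \frac{1+r}{r}\|\mathbf t\|^*_{\mathbf x_1}$.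
   Context: Fix nonzero real polynomials $g_1,\dots,g_m$ in $n$ variables and nonnegative integers $d_1,\dots,d_m$. Let $\mathcal V$ be the real vector space of polynomials $\sum_{i=1}^m g_i r_i$ with $\deg r_i\le 2d_i$, and $\Sigma\subseteq\mathcal V$ the cone of weighted sums of squares $\sum_i g_i\sigma_i$ with each $\sigma_i$ a sum of squares of polynomials of degree at most $d_i$; assume $\Sigma$ is a proper cone. Fix a basis $\mathbf q=(q_1,\dots,q_U)$ of $\mathcal V$, identify $\mathcal V$ and its dual with $\mathbb R^U$ with the standard inner product and Euclidean norm $\|\cdot\|$; $\Sigma^*$ is the dual cone, $K^\circ$ the interior of $K$; $\mathbf 1$ is the coefficient vector of the constant polynomial $1$. For each $i$ fix a basis $\mathbf p_i$ (of size $L_i$) of polynomials of degree at most $d_i$ and let $\Lambda_i:\mathbb R^U\to\mathbb S^{L_i}$ be the unique linear map with $\sum_u q_u\Lambda_i(\mathbf e_u)=g_i\mathbf p_i\mathbf p_i^T$; $\Lambda=\Lambda_1\oplus\cdots\oplus\Lambda_m$ (block diagonal), $\Lambda^*$ its adjoint. Then $(\Sigma^* )^\circ=\{\mathbf x:\Lambda(\mathbf x)\succ0\}$ and $\Sigma^*=\{\mathbf x:\Lambda(\mathbf x)\succeq0\}$. On $(\Sigma^* )^\circ$ let $f(\mathbf x)=-\ln\det\Lambda(\mathbf x)$, with gradient $g(\mathbf x)=-\Lambda^*(\Lambda(\mathbf x)^{-1})$ and Hessian $H(\mathbf x)\mathbf w=\Lambda^*(\Lambda(\mathbf x)^{-1}\Lambda(\mathbf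 w)\Lambda(\mathbf x)^{-1})$, positive definite. Local norm $\|\mathbf v\|_{\mathbf x}=\|H(\mathbf x)^{1/2}\mathbf v\|$, dual local norm $\|\mathbf s\|^*_{\mathbf x}=\|H(\mathbf x)^{-1/2}\mathbf s\|$. For $\mathbf s\in\mathcal V$, $\mathcal C(\mathbf s)=\{\mathbf x\in(\Sigma^* )^\circ:H(\mathbf x)^{-1}\mathbf s\in\Sigma^*\}$ (dual certificates of $\mathbf s$); for $\mathbf x\in(\Sigma^* )^\circ$, $\mathcal P(\mathbf x)=\{\mathbf s\in\Sigma:H(\mathbf x)^{-1}\mathbf s\in\Sigma^*\}$, and $\mathcal P(\mathbf x)^\circ$ its interior. For $\mathbf s\in\Sigma^\circ$, the gradient certificate of $\mathbf s$ is the unique $\mathbf y\in(\Sigma^* )^\circ$ with $-g(\mathbf y)=\mathbf s$. *)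

theory Defs
  imports "HOL-Analysis.Analysis" "HOL-Library.Poly_Mapping"
begin

type_synonym 'v mpoly = "('v \<Rightarrow>\<^sub>0 nat) \<Rightarrow>\<^sub>0 real"

definition mon_deg :: "('v \<Rightarrow>\<^sub>0 nat) \<Rightarrow> nat" where
  "mon_deg m = (\<Sum>v\<in>Poly_Mapping.keys m. Poly_Mapping.lookup m v)"

text \<open>degree at most d (the zero polynomial has degree at most every d)\<close>
definition deg_le :: "nat \<Rightarrow> 'v mpoly \<Rightarrow> bool" where
  "deg_le d p \<longleftrightarrow> (\<forall>m\<in>Poly_Mapping.keys p. mon_deg m \<le> d)"

definition smult_mp :: "real \<Rightarrow> 'v mpoly \<Rightarrow> 'v mpoly" where
  "smult_mp a p = Poly_Mapping.map (\<lambda>c. a * c) p"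

definition const_mp :: "real \<Rightarrow> 'v mpoly" where
  "const_mp a = Poly_Mapping.single 0 a"

definition sos_le :: "nat \<Rightarrow> 'v mpoly \<Rightarrow> bool" where
  "sos_le d s \<longleftrightarrow> (\<exists>hs. (\<forall>h\<in>set hs. deg_le d h) \<and> s = sum_list (map (\<lambda>h. h * h) hs))"

definition Vspace :: "('i::finite \<Rightarrow> 'v mpoly) \<Rightarrow> ('i \<Rightarrow> nat) \<Rightarrow> 'v mpoly set" where
  "Vspace g d = {(\<Sum>i\<in>UNIV. g i * r i) | r. \<forall>i. deg_le (2 * d i) (r i)}"

definition WSOS :: "('i::finite \<Rightarrow> 'v mpoly) \<Rightarrow> ('i \<Rightarrow> nat) \<Rightarrow> 'v mpoly set" where
  "WSOS g d = {(\<Sum>i\<in>UNIV. g i * \<sigma> i) | \<sigma>. \<forall>i. sos_le (d i) (\<sigma> i)}"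

definition is_basis_of :: "('k \<Rightarrow> 'v mpoly) \<Rightarrow> 'k set \<Rightarrow> 'v mpoly set \<Rightarrow> bool" where
  "is_basis_of b K S \<longleftrightarrow> finite K \<and>
     (\<forall>a. (\<Sum>k\<in>K. smult_mp (a k) (b k)) = 0 \<longrightarrow> (\<forall>k\<in>K. a k = 0)) \<and>
     S = {(\<Sum>k\<in>K. smult_mp (a k) (b k)) | a. True}"

definition coordv :: "('u::finite \<Rightarrow> 'v mpoly) \<Rightarrow> 'v mpoly \<Rightarrow> real^'u" where
  "coordv q s = (THE x. (\<Sum>u\<in>UNIV. smult_mp (x $ u) (q u)) = s)"

definition proper_cone :: "('a::euclidean_space) set \<Rightarrow> bool" where
  "proper_cone K \<longleftrightarrow> cone K \<and> convex K \<and> closed K \<and> interior K \<noteq> {} \<and>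
     (\<forall>x. x \<in> K \<and> - x \<in> K \<longrightarrow> x = 0)"

definition dual_cone :: "(real^'u) set \<Rightarrow> (real^'u) set" where
  "dual_cone K = {x. \<forall>s\<in>K. 0 \<le> x \<bullet> s}"

text \<open>The setup: basis q of V indexed by 'u; the union of all bases p_i indexed by 'k,
  where blk k says to which block i the basis polynomial p k belongs.\<close>

definition LamM :: "('u::finite \<Rightarrow> 'v mpoly) \<Rightarrow> ('i \<Rightarrow> 'v mpoly) \<Rightarrow> ('k::finite \<Rightarrow> 'i)
     \<Rightarrow> ('k \<Rightarrow> 'v mpoly) \<Rightarrow> real^'u \<Rightarrow> real^'k^'k" where
  "LamM q g blk p x = (\<chi> k l. if blk k = blk l
      then (\<Sum>u\<in>UNIV. x $ u * coordv q (g (blk k) * p k * p l) $ u) else 0)"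

definition LamAdj :: "('u::finite \<Rightarrow> 'v mpoly) \<Rightarrow> ('i \<Rightarrow> 'v mpoly) \<Rightarrow> ('k::finite \<Rightarrow> 'i)
     \<Rightarrow> ('k \<Rightarrow> 'v mpoly) \<Rightarrow> real^'k^'k \<Rightarrow> real^'u" where
  "LamAdj q g blk p S = (\<chi> u. \<Sum>k\<in>UNIV. \<Sum>l\<in>UNIV. S $ k $ l * LamM q g blk p (axis u 1) $ k $ l)"

text \<open>gradient of f(x) = - ln det Lambda(x)\<close>
definition gradf where
  "gradf q g blk p x = - LamAdj q g blk p (matrix_inv (LamM q g blk p x))"

definition hessf where
  "hessf q g blk p x w = LamAdj q g blk p
     (matrix_inv (LamM q g blk p x) ** LamM q g blk p w ** matrix_inv (LamM q g blk p x))"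

definition hessM where
  "hessM q g blk p x = (\<chi> u v. hessf q g blk p x (axis v 1) $ u)"

definition hess_inv_app where
  "hess_inv_app q g blk p x s = matrix_inv (hessM q g blk p x) *v s"

definition lnorm where
  "lnorm q g blk p x v = sqrt (v \<bullet> (hessM q g blk p x *v v))"

definition dnorm where
  "dnorm q g blk p x s = sqrt (s \<bullet> hess_inv_app q g blk p x s)"

definition SigmaC where
  "SigmaC q g d = coordv q ` WSOS g d"

definition SigmaD where
  "SigmaD q g d = dual_cone (SigmaC q g d)"

definition certs where
  "certs q g d blk p s = {x \<in> interior (SigmaD q g d). hess_inv_app q g blk p x s \<in> SigmaD q g d}"

definition Pset where
  "Pset q g d blk p x = {s \<in> SigmaC q g d. hess_inv_app q g blk p x s \<in> SigmaD q g d}"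

definition grad_cert where
  "grad_cert q g d blk p s = (THE y. y \<in> interior (SigmaD q g d) \<and> - gradf q g blk p y = s)"

end

theory Submission
  imports Defs "HOL-Homology.Invariance_of_Domain"
begin

(*
  Sigma* is the preimage of the
  positive semidefinite cone under Lambda and its interior is the preimage of the positive
  definite cone; as Sigma is proper, Lambda is injective, so Lambda* is onto and maps positive
  definite matrices into the interior of Sigma.

  Gradient certificates exist because y |-> -g(y) = Lambda*(Lambda(y)^-1) maps the interior of
  Sigma* bijectively onto the interior of Sigma: it is injective by the self-concordance estimate
  <g(y) - g(x), y - x> >= d^2 / (1 + d) with d = ||y - x||_x, its image is open by invariance of
  domain, and the image is relatively closed because <-g(y), y> is constant while -g blows up at
  the boundary of Sigma*.

  From H(x1) x1 = -g(x1) = 1 we get H(x1)^-1 (t + c 1) = c x1 + H(x1)^-1 t, a point of the Dikin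
  ellipsoid around c x1 as soon as ||t||*_x1 < c; so x1 certifies t + c 1.  Since
  H(x1/c) = c^2 H(x1) and -g(x1/c) = c 1, the self-concordance estimate at x1/c bounds the
  distance to the gradient certificate of t + c 1.  The first claim only needs 1 + t/c in P(x)
  for large c.
*)

section \<open>Positive definite matrices\<close>

definition outer_prod :: "real^'k \<Rightarrow> real^'k \<Rightarrow> real^'k^'k" where
  "outer_prod v w = (\<chi> i j. v$i * w$j)"

definition quad_form :: "real^'k^'k \<Rightarrow> real^'k \<Rightarrow> real" where
  "quad_form M a = a \<bullet> (M *v a)"

definition psd_matrix :: "real^'k^'k \<Rightarrow> bool" where
  "psd_matrix M \<longleftrightarrow> (\<forall>a. 0 \<le> quad_form M a)"

definition pd_matrix :: "real^'k^'k \<Rightarrow> bool" where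
  "pd_matrix M \<longleftrightarrow> (\<forall>a. a \<noteq> 0 \<longrightarrow> 0 < quad_form M a)"

definition symmetric_matrix :: "real^'k^'k \<Rightarrow> bool" where
  "symmetric_matrix M \<longleftrightarrow> transpose M = M"

lemma inner_matrix_eq_sum: "(M::real^'k^'k) \<bullet> N = (\<Sum>i\<in>UNIV. \<Sum>j\<in>UNIV. M$i$j * N$i$j)"
  by (simp add: inner_vec_def)

lemma inner_matrix_vector_mult_eq_sum:
  "a \<bullet> ((M::real^'k^'k) *v b) = (\<Sum>i\<in>UNIV. \<Sum>j\<in>UNIV. a$i * M$i$j * b$j)"
  by (simp add: inner_vec_def matrix_vector_mult_def sum_distrib_left mult.assoc)

lemma inner_outer_prod: "M \<bullet> outer_prod v w = v \<bullet> (M *v w)"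
  by (simp add: inner_matrix_eq_sum inner_matrix_vector_mult_eq_sum outer_prod_def mult_ac)

lemma outer_prod_mult_vector: "outer_prod v w *v a = (w \<bullet> a) *\<^sub>R v"
  by (simp add: vec_eq_iff outer_prod_def matrix_vector_mult_def inner_vec_def sum_distrib_left
      mult_ac)

lemma outer_prod_scaleR_left [simp]: "outer_prod ((c::real) *\<^sub>R v) w = c *\<^sub>R outer_prod v w"
  by (simp add: vec_eq_iff outer_prod_def mult_ac)

lemma outer_prod_scaleR_right [simp]: "outer_prod v ((c::real) *\<^sub>R w) = c *\<^sub>R outer_prod v w"
  by (simp add: vec_eq_iff outer_prod_def mult_ac)

lemma transpose_outer_prod [simp]: "transpose (outer_prod v w) = outer_prod w v"
  by (simp add: vec_eq_iff outer_prod_def transpose_def mult.commute)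

lemma quad_form_outer_prod: "quad_form (outer_prod v v) a = (v \<bullet> a)^2"
  by (simp add: quad_form_def outer_prod_mult_vector power2_eq_square inner_commute)

lemma scaleR_matrix_vector_mult [simp]: "((c::real) *\<^sub>R (M::real^'k^'k)) *v x = c *\<^sub>R (M *v x)"
  by (simp add: vec_eq_iff matrix_vector_mult_def sum_distrib_left mult.assoc)

lemma inner_matrix_vector_mult_transpose: "a \<bullet> ((M::real^'k^'k) *v b) = (transpose M *v a) \<bullet> b"
  by (metis dot_lmul_matrix transpose_matrix_vector)

lemma symmetric_matrix_transpose: "symmetric_matrix A \<Longrightarrow> transpose A = A"
  by (simp add: symmetric_matrix_def)

lemma symmetric_matrix_inner_commute:
  "symmetric_matrix M \<Longrightarrow> a \<bullet> (M *v b) = b \<bullet> (M *v a)"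
  by (metis inner_commute inner_matrix_vector_mult_transpose symmetric_matrix_def)

lemma symmetric_matrix_diff: "symmetric_matrix A \<Longrightarrow> symmetric_matrix B \<Longrightarrow> symmetric_matrix (A - B)"
  and symmetric_matrix_scaleR: "symmetric_matrix A \<Longrightarrow> symmetric_matrix (c *\<^sub>R A)"
  by (simp_all add: symmetric_matrix_def transpose_def vec_eq_iff)

lemma quad_form_add: "quad_form (A + B) x = quad_form A x + quad_form B x"
  and quad_form_diff: "quad_form (A - B) x = quad_form A x - quad_form B x"
  and quad_form_scaleR: "quad_form (c *\<^sub>R A) x = c * quad_form A x"
  by (simp_all add: quad_form_def matrix_vector_mult_add_rdistrib matrix_vector_mult_diff_rdistrib
      inner_add_right inner_diff_right)

lemma quad_form_add_scaleR:
  "symmetric_matrix M \<Longrightarrow>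
   quad_form M (a + t *\<^sub>R b) = quad_form M a + 2*t*(a \<bullet> (M *v b)) + t^2 * quad_form M b"
  unfolding quad_form_def
  by (simp add: matrix_vector_right_distrib matrix_vector_mult_scaleR inner_add_left inner_add_right
      symmetric_matrix_inner_commute[of M b a] power2_eq_square algebra_simps)

lemma matrix_vector_mult_axis: "((M::real^'k^'k) *v axis j 1) $ i = M$i$j"
  by (simp add: matrix_vector_mult_def axis_def if_distrib cong: if_cong)

lemma quad_form_axis: "quad_form (M::real^'k^'k) (axis j 1) = M$j$j"
  by (simp add: quad_form_def inner_commute[of "axis j 1"] cart_eq_inner_axis[symmetric]
      matrix_vector_mult_axis)

lemma pd_imp_psd_matrix: "pd_matrix A \<Longrightarrow> psd_matrix A"
  unfolding pd_matrix_def psd_matrix_def quad_form_def by (metis inner_zero_left order_le_less)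

lemma pd_matrix_scaleR: "pd_matrix A \<Longrightarrow> 0 < c \<Longrightarrow> pd_matrix (c *\<^sub>R A)"
  by (simp add: pd_matrix_def quad_form_scaleR)

lemma quadratic_nonneg_imp_discriminant:
  fixes A B C :: real
  assumes nonneg: "\<And>t. 0 \<le> A + 2*t*B + t^2*C" and "0 \<le> C"
  shows "B^2 \<le> A*C"
proof (cases "C = 0")
  case True
  have "B = 0"
  proof (rule ccontr)
    assume "B \<noteq> 0"
    have "0 \<le> A + 2*(-(A+1)/(2*B))*B + (-(A+1)/(2*B))^2*C" by (rule nonneg)
    also have "\<dots> = -1" using \<open>B \<noteq> 0\<close> True by (simp add: field_simps)
    finally show False by simp
  qed
  then show ?thesis using True by simp
next
  case False
  then have "C > 0" using \<open>0 \<le> C\<close> by simp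
  have "0 \<le> A + 2*(-B/C)*B + (-B/C)^2*C" by (rule nonneg)
  also have "\<dots> = A - B^2/C" using \<open>C > 0\<close> by (simp add: field_simps power2_eq_square)
  finally show ?thesis using \<open>C > 0\<close> by (simp add: field_simps)
qed

lemma psd_matrix_cauchy_schwarz:
  assumes "psd_matrix M" "symmetric_matrix M"
  shows "(a \<bullet> (M *v b))^2 \<le> quad_form M a * quad_form M b"
proof (rule quadratic_nonneg_imp_discriminant)
  show "0 \<le> quad_form M a + 2 * t * (a \<bullet> (M *v b)) + t^2 * quad_form M b" for t
  proof -
    have "0 \<le> quad_form M (a + t *\<^sub>R b)" using assms(1) psd_matrix_def by blast
    then show ?thesis using quad_form_add_scaleR[OF assms(2)] by simp
  qed
  show "0 \<le> quad_form M b"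
    using assms(1) by (simp add: psd_matrix_def)
qed

lemma psd_matrix_quad_form_eq_0:
  assumes "psd_matrix M" "symmetric_matrix M" "quad_form M a = 0"
  shows "M *v a = 0"
proof -
  have "(b \<bullet> (M *v a))^2 \<le> 0" for b
    using psd_matrix_cauchy_schwarz[OF assms(1,2), of b a] assms(3) by simp
  then have "(M *v a) \<bullet> (M *v a) = 0" by simp
  then show ?thesis by simp
qed

lemma symmetric_matrix_entry:
  "symmetric_matrix M \<Longrightarrow> M$i$j = M$j$i"
  unfolding symmetric_matrix_def by (metis transpose_def vec_lambda_beta)

lemma psd_matrix_zero_diagonal:
  assumes "psd_matrix M" "symmetric_matrix M" "M$j$j = 0"
  shows "M$i$j = 0" and "M$j$i = 0"
proof -
  have "quad_form M (axis j 1) = 0" using assms(3) by (simp add: quad_form_axis)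
  then have "M *v axis j 1 = 0" by (rule psd_matrix_quad_form_eq_0[OF assms(1,2)])
  then show "M$i$j = 0" by (metis matrix_vector_mult_axis zero_index)
  then show "M$j$i = 0" using symmetric_matrix_entry[OF assms(2)] by simp
qed

lemma psd_matrix_remove_column:
  fixes M :: "real^'k::finite^'k"
  assumes psd: "psd_matrix M" and sym: "symmetric_matrix M" and pos: "0 < M$j$j"
  defines "w \<equiv> (1 / sqrt (M$j$j)) *\<^sub>R column j M"
  shows "psd_matrix (M - outer_prod w w)" "symmetric_matrix (M - outer_prod w w)"
    and "(M - outer_prod w w)$i$l = M$i$l - M$i$j * M$l$j / M$j$j"
proof -
  define m where "m = column j M"
  have "(1 / sqrt (M$j$j)) * (1 / sqrt (M$j$j)) = 1 / M$j$j"
    using pos by (simp flip: real_sqrt_mult)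
  then have ww: "outer_prod w w = (1 / M$j$j) *\<^sub>R outer_prod m m"
    by (simp add: w_def m_def)
  have "M *v axis j 1 = m" by (simp add: m_def column_def vec_eq_iff matrix_vector_mult_axis)
  then have cs: "(x \<bullet> m)^2 \<le> quad_form M x * M$j$j" for x
    using psd_matrix_cauchy_schwarz[OF psd sym, of x "axis j 1"] by (simp add: quad_form_axis)
  show "psd_matrix (M - outer_prod w w)"
    unfolding psd_matrix_def
  proof
    fix x
    have "quad_form (M - outer_prod w w) x = quad_form M x - (1 / M$j$j) * (m \<bullet> x)^2"
      by (simp add: ww quad_form_def matrix_vector_mult_diff_rdistrib outer_prod_mult_vector
          inner_diff_right power2_eq_square inner_commute)
    also have "\<dots> \<ge> 0"
      using cs[of x] pos by (simp add: field_simps inner_commute)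
    finally show "0 \<le> quad_form (M - outer_prod w w) x" .
  qed
  show "symmetric_matrix (M - outer_prod w w)"
    using sym by (simp add: ww symmetric_matrix_def transpose_def vec_eq_iff outer_prod_def
        mult.commute)
  show "(M - outer_prod w w)$i$l = M$i$l - M$i$j * M$l$j / M$j$j"
    unfolding ww by (simp add: m_def outer_prod_def column_def)
qed

lemma psd_matrix_sum_outer_prods_supported:
  fixes M :: "real^'k::finite^'k"
  assumes "finite J" "psd_matrix M" "symmetric_matrix M" "\<And>i l. i \<notin> J \<Longrightarrow> M$i$l = 0"
  shows "\<exists>(n::nat) v. M = (\<Sum>j<n. outer_prod (v j) (v j))"
  using assms
proof (induction J arbitrary: M rule: finite_induct)
  case empty
  then have "M = (\<Sum>j<0::nat. outer_prod (v j) (v j))" for v by (simp add: vec_eq_iff)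
  then show ?case by blast
next
  case (insert j J)
  have "M$j$j \<ge> 0" using insert.prems(1) by (metis psd_matrix_def quad_form_axis)
  then consider "M$j$j = 0" | "M$j$j > 0" by linarith
  then show ?case
  proof cases
    case 1
    then have "M$i$l = 0" if "i \<notin> J" for i l
      using insert.prems that psd_matrix_zero_diagonal(2)[OF insert.prems(1,2)]
      by (cases "i = j") auto
    then show ?thesis using insert.IH insert.prems(1,2) by blast
  next
    case 2
    define w where "w = (1 / sqrt (M$j$j)) *\<^sub>R column j M"
    note remove = psd_matrix_remove_column[OF insert.prems(1,2) 2, folded w_def]
    have "(M - outer_prod w w)$i$l = 0" if "i \<notin> J" for i l
      unfolding remove(3)
        using insert.prems that 2 symmetric_matrix_entry[OF insert.prems(2), of j l]
      by (cases "i = j") auto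
    then obtain n :: nat and v where "M - outer_prod w w = (\<Sum>j<n. outer_prod (v j) (v j))"
      using insert.IH remove(1,2) by blast
    then have "M = (\<Sum>i<Suc n. outer_prod ((v(n := w)) i) ((v(n := w)) i))"
      by (simp add: diff_eq_eq)
    then show ?thesis by blast
  qed
qed

lemma psd_matrix_sum_outer_prods:
  fixes M :: "real^'k::finite^'k"
  assumes "psd_matrix M" "symmetric_matrix M"
  shows "\<exists>(n::nat) v. M = (\<Sum>j<n. outer_prod (v j) (v j))"
  using psd_matrix_sum_outer_prods_supported[OF finite assms] by blast

lemma matrix_mult_sum_left: "(\<Sum>j\<in>S. f j) ** (B::real^'k^'k) = (\<Sum>j\<in>S. f j ** B)"
  unfolding vec_eq_iff
  by (simp add: matrix_matrix_mult_def sum_component sum_distrib_right) (intro allI sum.swap)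

lemma matrix_mult_sum_right: "(B::real^'k^'k) ** (\<Sum>j\<in>S. f j) = (\<Sum>j\<in>S. B ** f j)"
  unfolding vec_eq_iff
  by (simp add: matrix_matrix_mult_def sum_component sum_distrib_left) (intro allI sum.swap)

lemma matrix_add_rdistrib: "((A::real^'k^'k) + B) ** C = A ** C + B ** C"
  and matrix_diff_rdistrib: "((A::real^'k^'k) - B) ** C = A ** C - B ** C"
  and matrix_diff_ldistrib: "(C::real^'k^'k) ** (A - B) = C ** A - C ** B"
  by (simp_all add: matrix_matrix_mult_def vec_eq_iff sum.distrib sum_subtractf algebra_simps)

lemma matrix_mult_scaleR_left [simp]: "((k::real) *\<^sub>R (A::real^'k^'k)) ** B = k *\<^sub>R (A ** B)"
  by (rule scalar_matrix_assoc[symmetric])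

lemma matrix_mult_scaleR_right [simp]: "(A::real^'k^'k) ** ((k::real) *\<^sub>R B) = k *\<^sub>R (A ** B)"
  by (simp only: matrix_scalar_ac scalar_matrix_assoc)

lemma matrix_mult_outer_prod_right: "(M::real^'k^'k) ** outer_prod v w = outer_prod (M *v v) w"
  by (simp add: vec_eq_iff matrix_matrix_mult_def outer_prod_def matrix_vector_mult_def
      sum_distrib_right sum_distrib_left) (auto intro!: sum.cong simp: mult_ac)

lemma matrix_mult_outer_prod_left:
  "outer_prod v w ** (M::real^'k^'k) = outer_prod v (transpose M *v w)"
  by (simp add: vec_eq_iff matrix_matrix_mult_def outer_prod_def matrix_vector_mult_def
      transpose_def sum_distrib_left mult_ac)

lemma outer_prod_sandwich:
  "outer_prod v v ** A ** outer_prod w w = (v \<bullet> (A *v w)) *\<^sub>R outer_prod v w"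
  by (simp add: matrix_mult_outer_prod_left matrix_mult_outer_prod_right outer_prod_mult_vector
      inner_matrix_vector_mult_transpose[of v A w] inner_commute)

lemma inner_matrix_mult_left:
  fixes P Q R :: "real^'k^'k"
  shows "(P ** Q) \<bullet> R = Q \<bullet> (transpose P ** R)"
proof -
  have "(P ** Q) \<bullet> R = (\<Sum>i\<in>UNIV. \<Sum>j\<in>UNIV. \<Sum>k\<in>UNIV. P$i$k * Q$k$j * R$i$j)"
    unfolding inner_matrix_eq_sum by (simp add: matrix_matrix_mult_def sum_distrib_right)
  also have "\<dots> = (\<Sum>i\<in>UNIV. \<Sum>k\<in>UNIV. \<Sum>j\<in>UNIV. P$i$k * Q$k$j * R$i$j)"
    by (rule sum.cong[OF refl], rule sum.swap)
  also have "\<dots> = (\<Sum>k\<in>UNIV. \<Sum>i\<in>UNIV. \<Sum>j\<in>UNIV. P$i$k * Q$k$j * R$i$j)"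
    by (rule sum.swap)
  also have "\<dots> = (\<Sum>k\<in>UNIV. \<Sum>j\<in>UNIV. \<Sum>i\<in>UNIV. P$i$k * Q$k$j * R$i$j)"
    by (rule sum.cong[OF refl], rule sum.swap)
  also have "\<dots> = Q \<bullet> (transpose P ** R)"
    unfolding inner_matrix_eq_sum
    by (simp add: matrix_matrix_mult_def transpose_def sum_distrib_left mult_ac)
  finally show ?thesis .
qed

lemma inner_matrix_mult_right:
  fixes P Q R :: "real^'k^'k"
  shows "(P ** Q) \<bullet> R = P \<bullet> (R ** transpose Q)"
proof -
  have "(P ** Q) \<bullet> R = (\<Sum>i\<in>UNIV. \<Sum>j\<in>UNIV. \<Sum>k\<in>UNIV. P$i$k * Q$k$j * R$i$j)"
    unfolding inner_matrix_eq_sum by (simp add: matrix_matrix_mult_def sum_distrib_right)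
  also have "\<dots> = (\<Sum>i\<in>UNIV. \<Sum>k\<in>UNIV. \<Sum>j\<in>UNIV. P$i$k * Q$k$j * R$i$j)"
    by (rule sum.cong[OF refl], rule sum.swap)
  also have "\<dots> = P \<bullet> (R ** transpose Q)"
    unfolding inner_matrix_eq_sum
    by (simp add: matrix_matrix_mult_def transpose_def sum_distrib_left mult_ac)
  finally show ?thesis .
qed

lemma inner_psd_matrix_nonneg:
  assumes "psd_matrix X" "symmetric_matrix X" "psd_matrix Y"
  shows "0 \<le> X \<bullet> (Y::real^'k::finite^'k)"
proof -
  obtain n :: nat and v where X: "X = (\<Sum>j<n. outer_prod (v j) (v j))"
    using psd_matrix_sum_outer_prods[OF assms(1,2)] by blast
  have "X \<bullet> Y = (\<Sum>j<n. quad_form Y (v j))"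
    by (simp add: X inner_sum_left inner_commute[of "outer_prod _ _"] inner_outer_prod
        quad_form_def)
  also have "\<dots> \<ge> 0" using assms(3) by (intro sum_nonneg) (simp add: psd_matrix_def)
  finally show ?thesis .
qed

lemma psd_matrix_congruence:
  assumes "psd_matrix X" "symmetric_matrix D"
  shows "psd_matrix (D ** X ** D)"
  unfolding psd_matrix_def
proof
  fix a
  have "quad_form (D ** X ** D) a = quad_form X (D *v a)"
    by (simp add: quad_form_def matrix_vector_mul_assoc[symmetric]
        inner_matrix_vector_mult_transpose[of a D] symmetric_matrix_transpose[OF assms(2)])
  then show "0 \<le> quad_form (D ** X ** D) a" using assms(1) by (simp add: psd_matrix_def)
qed

lemma pd_matrix_congruence:
  fixes M X :: "real^'k^'k"
  assumes "pd_matrix M" "pd_matrix X" "symmetric_matrix X"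
  shows "pd_matrix (X ** M ** X)"
  unfolding pd_matrix_def
proof (intro allI impI)
  fix a :: "real^'k" assume "a \<noteq> 0"
  then have "0 < quad_form X a" using assms(2) by (simp add: pd_matrix_def)
  then have "X *v a \<noteq> 0" by (auto simp: quad_form_def)
  then have "0 < quad_form M (X *v a)" using assms(1) by (simp add: pd_matrix_def)
  also have "quad_form M (X *v a) = quad_form (X ** M ** X) a"
    by (simp add: quad_form_def matrix_vector_mul_assoc[symmetric]
        inner_matrix_vector_mult_transpose[of a X] symmetric_matrix_transpose[OF assms(3)])
  finally show "0 < quad_form (X ** M ** X) a" .
qed

lemma matrix_inv_right: "A ** matrix_inv A = mat 1"
  and matrix_inv_left: "matrix_inv A ** A = mat 1"
  if "invertible (A::real^'k^'k)"
  using someI_ex[OF that[unfolded invertible_def]] by (auto simp: matrix_inv_def)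

lemma matrix_inv_unique:
  fixes A B :: "real^'k^'k"
  assumes "B ** A = mat 1"
  shows "matrix_inv A = B"
proof -
  have "invertible A" using assms invertible_left_inverse by blast
  have "matrix_inv A = (B ** A) ** matrix_inv A" by (simp add: assms)
  also have "\<dots> = B ** (A ** matrix_inv A)" by (simp add: matrix_mul_assoc)
  also have "\<dots> = B" using matrix_inv_right[OF \<open>invertible A\<close>] by simp
  finally show ?thesis .
qed

lemma pd_matrix_invertible: "pd_matrix (A::real^'k^'k) \<Longrightarrow> invertible A"
  unfolding invertible_left_inverse matrix_left_invertible_ker pd_matrix_def quad_form_def
  by (metis inner_zero_right less_irrefl)

lemma pd_matrix_mult_inv:
  fixes P :: "real^'k^'k"
  assumes "pd_matrix P"
  shows "P ** matrix_inv P = mat 1" "matrix_inv P ** P = mat 1"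
  using pd_matrix_invertible[OF assms] by (rule matrix_inv_right, rule matrix_inv_left)

lemma pd_matrix_inv_mult_vector:
  fixes P :: "real^'k^'k"
  assumes "pd_matrix P"
  shows "P *v (matrix_inv P *v a) = a" "matrix_inv P *v (P *v a) = a"
  by (simp_all add: matrix_vector_mul_assoc pd_matrix_mult_inv[OF assms])

lemma symmetric_matrix_inv:
  fixes P :: "real^'k^'k"
  assumes "pd_matrix P" "symmetric_matrix P"
  shows "symmetric_matrix (matrix_inv P)"
proof -
  have "transpose (matrix_inv P) ** P = transpose (P ** matrix_inv P)"
    using symmetric_matrix_transpose[OF assms(2)] by (simp add: matrix_transpose_mul)
  also have "\<dots> = mat 1" by (simp add: pd_matrix_mult_inv[OF assms(1)] transpose_mat)
  finally have "matrix_inv P = transpose (matrix_inv P)" by (rule matrix_inv_unique)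
  then show ?thesis unfolding symmetric_matrix_def by (rule sym)
qed

lemma pd_matrix_inv:
  fixes P :: "real^'k^'k"
  assumes "pd_matrix P" "symmetric_matrix P"
  shows "pd_matrix (matrix_inv P)"
  unfolding pd_matrix_def
proof (intro allI impI)
  fix a :: "real^'k" assume "a \<noteq> 0"
  define b where "b = matrix_inv P *v a"
  have Pb: "P *v b = a" by (simp add: b_def pd_matrix_inv_mult_vector[OF assms(1)])
  then have "b \<noteq> 0" using \<open>a \<noteq> 0\<close> by auto
  then have "0 < quad_form P b" using assms(1) by (simp add: pd_matrix_def)
  also have "quad_form P b = quad_form (matrix_inv P) a"
    by (simp add: quad_form_def Pb) (simp add: b_def inner_commute)
  finally show "0 < quad_form (matrix_inv P) a" .
qed

lemma matrix_inv_scaleR: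
  fixes P :: "real^'k^'k"
  assumes "pd_matrix P" "c \<noteq> 0"
  shows "matrix_inv (c *\<^sub>R P) = (1/c) *\<^sub>R matrix_inv P"
  by (rule matrix_inv_unique) (use assms pd_matrix_mult_inv in simp)

lemma psd_matrix_inv_antimono:
  fixes A B :: "real^'k::finite^'k"
  assumes "pd_matrix A" "symmetric_matrix A" "pd_matrix B" "psd_matrix (B - A)"
  shows "psd_matrix (matrix_inv A - matrix_inv B)"
  unfolding psd_matrix_def
proof
  fix x :: "real^'k"
  define y where "y = matrix_inv B *v x"
  define z where "z = matrix_inv A *v x"
  have Az: "A *v z = x" by (simp add: z_def pd_matrix_inv_mult_vector assms)
  have By: "B *v y = x" by (simp add: y_def pd_matrix_inv_mult_vector assms)
  have yx: "0 \<le> y \<bullet> x"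
    using assms(3) pd_imp_psd_matrix By by (metis psd_matrix_def quad_form_def)
  have zx: "0 \<le> x \<bullet> z"
    using assms(1) pd_imp_psd_matrix Az by (metis psd_matrix_def quad_form_def inner_commute)
  have "quad_form A y \<le> quad_form B y"
    using assms(4) by (simp add: psd_matrix_def quad_form_diff)
  also have "quad_form B y = y \<bullet> x" by (simp add: quad_form_def By)
  finally have Ay: "quad_form A y \<le> y \<bullet> x" .
  have Az': "quad_form A z = x \<bullet> z" by (simp add: quad_form_def Az inner_commute)
  have "(y \<bullet> x)^2 \<le> quad_form A y * quad_form A z"
    using psd_matrix_cauchy_schwarz[OF pd_imp_psd_matrix[OF assms(1)] assms(2), of y z]
    by (simp only: Az)
  also have "\<dots> \<le> (y \<bullet> x) * (x \<bullet> z)"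
    unfolding Az' using Ay zx by (rule mult_right_mono)
  finally have "y \<bullet> x \<le> x \<bullet> z"
    using yx by (cases "y \<bullet> x = 0") (auto simp: power2_eq_square zx)
  then show "0 \<le> quad_form (matrix_inv A - matrix_inv B) x"
    by (simp add: quad_form_def y_def z_def inner_commute matrix_vector_mult_diff_rdistrib
        inner_diff_right)
qed

subsection \<open>Self-concordance of \<open>-ln det\<close>\<close>

text \<open>With \<open>X = \<Lambda>(x)\<inverse>\<close> this is the Hessian of \<open>-ln det \<Lambda>\<close> at \<open>x\<close>, evaluated
  at \<open>\<Lambda>(v)\<close> and \<open>\<Lambda>(w)\<close>.\<close>

definition sandwich_inner :: "real^'k^'k \<Rightarrow> real^'k^'k \<Rightarrow> real^'k^'k \<Rightarrow> real" where
  "sandwich_inner X A B = (X ** A ** X) \<bullet> B"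

lemma sandwich_inner_nonneg:
  assumes "psd_matrix X" "symmetric_matrix X"
  shows "0 \<le> sandwich_inner X A (A::real^'k::finite^'k)"
proof -
  obtain n :: nat and v where X: "X = (\<Sum>j<n. outer_prod (v j) (v j))"
    using psd_matrix_sum_outer_prods[OF assms] by blast
  have "X ** A ** X = (\<Sum>l<n. \<Sum>j<n. outer_prod (v j) (v j) ** A ** outer_prod (v l) (v l))"
    by (simp add: X matrix_mult_sum_left matrix_mult_sum_right)
  then have "sandwich_inner X A A = (\<Sum>l<n. \<Sum>j<n. (v j \<bullet> (A *v v l))^2)"
    by (simp add: sandwich_inner_def outer_prod_sandwich inner_sum_left
        inner_commute[of "outer_prod _ _"]
        inner_outer_prod power2_eq_square)
  also have "\<dots> \<ge> 0" by (intro sum_nonneg) simp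
  finally show ?thesis .
qed

lemma sandwich_inner_commute:
  fixes X A B :: "real^'k^'k"
  assumes "symmetric_matrix X" "symmetric_matrix A" "symmetric_matrix B"
  shows "sandwich_inner X A B = sandwich_inner X B A"
proof -
  note sym = assms[THEN symmetric_matrix_transpose]
  have "sandwich_inner X A B = (X ** A) \<bullet> (B ** X)"
    by (simp add: sandwich_inner_def inner_matrix_mult_right sym)
  also have "\<dots> = A \<bullet> (X ** (B ** X))" by (simp add: inner_matrix_mult_left sym)
  also have "\<dots> = sandwich_inner X B A"
    by (simp add: sandwich_inner_def matrix_mul_assoc inner_commute)
  finally show ?thesis .
qed

lemma sandwich_inner_uminus: "sandwich_inner X (- A) (- A) = sandwich_inner X A A"
  by (simp add: sandwich_inner_def inner_matrix_eq_sum matrix_matrix_mult_def sum_negf)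

lemma sandwich_inner_cauchy_schwarz:
  fixes X A B :: "real^'k::finite^'k"
  assumes "psd_matrix X" "symmetric_matrix X" "symmetric_matrix A" "symmetric_matrix B"
  shows "(sandwich_inner X A B)^2 \<le> sandwich_inner X A A * sandwich_inner X B B"
proof (rule quadratic_nonneg_imp_discriminant)
  fix t
  have "sandwich_inner X (A + t *\<^sub>R B) (A + t *\<^sub>R B) =
      sandwich_inner X A A + t * sandwich_inner X A B + t * sandwich_inner X B A
      + t^2 * sandwich_inner X B B"
    by (simp add: sandwich_inner_def matrix_add_ldistrib matrix_add_rdistrib
        inner_add_left inner_add_right power2_eq_square algebra_simps)
  moreover have "0 \<le> sandwich_inner X (A + t *\<^sub>R B) (A + t *\<^sub>R B)"
    by (rule sandwich_inner_nonneg[OF assms(1,2)])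
  ultimately show "0 \<le> sandwich_inner X A A + 2 * t * sandwich_inner X A B
      + t^2 * sandwich_inner X B B"
    using sandwich_inner_commute[OF assms(2,3,4)] by simp
  show "0 \<le> sandwich_inner X B B" by (rule sandwich_inner_nonneg[OF assms(1,2)])
qed

lemma inner_matrix_mult_cyclic:
  fixes X D Y :: "real^'k::finite^'k"
  assumes "symmetric_matrix X" "symmetric_matrix D"
  shows "(Y ** D ** X) \<bullet> D = Y \<bullet> (D ** X ** D)"
proof -
  have "(Y ** D ** X) \<bullet> D = (Y ** (D ** X)) \<bullet> D" by (simp add: matrix_mul_assoc)
  also have "\<dots> = Y \<bullet> (D ** transpose (D ** X))" by (rule inner_matrix_mult_right)
  also have "transpose (D ** X) = X ** D"
    using assms by (simp add: matrix_transpose_mul symmetric_matrix_transpose)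
  finally show ?thesis by (simp add: matrix_mul_assoc)
qed

lemma quad_form_sandwich_inner_bound:
  fixes P W :: "real^'k::finite^'k"
  assumes "pd_matrix P" "symmetric_matrix P" "symmetric_matrix W"
  shows "\<bar>quad_form W a\<bar> \<le> sqrt (sandwich_inner (matrix_inv P) W W) * quad_form P a"
proof -
  define X where "X = matrix_inv P"
  have sX: "symmetric_matrix X" and pX: "psd_matrix X"
    using symmetric_matrix_inv[OF assms(1,2)] pd_matrix_inv[OF assms(1,2)]
    by (auto simp: X_def pd_imp_psd_matrix)
  have XP: "X *v (P *v a) = a" by (simp add: X_def pd_matrix_inv_mult_vector assms)
  define B where "B = outer_prod (P *v a) (P *v a)"
  have sB: "symmetric_matrix B" by (simp add: B_def symmetric_matrix_def)
  have "sandwich_inner X W B = (P *v a) \<bullet> (X *v (W *v (X *v (P *v a))))"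
    by (simp add: sandwich_inner_def B_def inner_outer_prod matrix_vector_mul_assoc
      matrix_mul_assoc)
  also have "\<dots> = quad_form W a"
    by (simp add: XP quad_form_def inner_matrix_vector_mult_transpose[of "P *v a" X]
        symmetric_matrix_transpose[OF sX])
  finally have WB: "sandwich_inner X W B = quad_form W a" .
  have "X ** B ** X = outer_prod a a"
    by (simp add: B_def matrix_mult_outer_prod_right matrix_mult_outer_prod_left XP
        symmetric_matrix_transpose[OF sX])
  then have BB: "sandwich_inner X B B = (quad_form P a)^2"
    by (simp add: sandwich_inner_def B_def inner_commute[of "outer_prod _ _"] inner_outer_prod
        outer_prod_mult_vector quad_form_def power2_eq_square inner_commute)
  have "(quad_form W a)^2 \<le> sandwich_inner X W W * (quad_form P a)^2"
    using sandwich_inner_cauchy_schwarz[OF pX sX assms(3) sB] by (simp only: WB BB)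
  then have "sqrt ((quad_form W a)^2) \<le> sqrt (sandwich_inner X W W * (quad_form P a)^2)"
    by (rule real_sqrt_le_mono)
  moreover have "0 \<le> quad_form P a"
    using pd_imp_psd_matrix[OF assms(1)] by (simp add: psd_matrix_def)
  ultimately show ?thesis by (simp add: X_def real_sqrt_mult)
qed

lemma pd_matrix_add_in_Dikin_ellipsoid:
  fixes P W :: "real^'k::finite^'k"
  assumes "pd_matrix P" "symmetric_matrix P" "symmetric_matrix W"
    and "sandwich_inner (matrix_inv P) W W < 1"
  shows "pd_matrix (P + W)"
  unfolding pd_matrix_def
proof (intro allI impI)
  fix a :: "real^'k" assume "a \<noteq> 0"
  then have "0 < quad_form P a" using assms(1) by (simp add: pd_matrix_def)
  moreover have "sqrt (sandwich_inner (matrix_inv P) W W) < 1" using assms(4) by simp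
  ultimately have "sqrt (sandwich_inner (matrix_inv P) W W) * quad_form P a < quad_form P a"
    by simp
  then have "\<bar>quad_form W a\<bar> < quad_form P a"
    using quad_form_sandwich_inner_bound[OF assms(1-3), of a] by linarith
  then show "0 < quad_form (P + W) a" by (simp add: quad_form_add)
qed

lemma sandwich_inner_eq_0_imp:
  fixes P A :: "real^'k::finite^'k"
  assumes "pd_matrix P" "symmetric_matrix P" "symmetric_matrix A"
    and "sandwich_inner (matrix_inv P) A A = 0"
  shows "A = 0"
proof -
  have z: "quad_form A a = 0" for a
    using quad_form_sandwich_inner_bound[OF assms(1-3), of a] assms(4) by simp
  have "a \<bullet> (A *v b) = 0" for a b
    using quad_form_add_scaleR[OF assms(3), of a 1 b] z[of a] z[of b] z[of "a + b"] by simp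
  then have "A *v b = 0" for b by (metis inner_eq_zero_iff)
  then show "A = 0" by (metis matrix_vector_mult_axis vec_eq_iff zero_index)
qed

lemma psd_matrix_scaleR_minus:
  fixes P Q :: "real^'k::finite^'k"
  assumes "pd_matrix P" "symmetric_matrix P" "symmetric_matrix Q"
  shows "psd_matrix ((1 + sqrt (sandwich_inner (matrix_inv P) (Q - P) (Q - P))) *\<^sub>R P - Q)"
  unfolding psd_matrix_def
proof
  fix a
  let ?\<delta> = "sqrt (sandwich_inner (matrix_inv P) (Q - P) (Q - P))"
  have "\<bar>quad_form (Q - P) a\<bar> \<le> ?\<delta> * quad_form P a"
    by (rule quad_form_sandwich_inner_bound[OF assms(1,2) symmetric_matrix_diff[OF assms(3,2)]])
  moreover have "quad_form (Q - P) a = quad_form Q a - quad_form P a"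
    by (rule quad_form_diff)
  moreover have "quad_form ((1 + ?\<delta>) *\<^sub>R P - Q) a = (1 + ?\<delta>) * quad_form P a - quad_form Q a"
    by (simp only: quad_form_diff quad_form_scaleR)
  ultimately show "0 \<le> quad_form ((1 + ?\<delta>) *\<^sub>R P - Q) a"
    by (simp add: algebra_simps abs_le_iff)
qed

lemma psd_matrix_inv_diff_scaleR:
  fixes P Q :: "real^'k::finite^'k"
  assumes pP: "pd_matrix P" and sP: "symmetric_matrix P" and pQ: "pd_matrix Q"
    and sQ: "symmetric_matrix Q"
  defines "\<delta> \<equiv> sqrt (sandwich_inner (matrix_inv P) (Q - P) (Q - P))"
  shows "psd_matrix (matrix_inv Q - (1 / (1 + \<delta>)) *\<^sub>R matrix_inv P)"
proof -
  have "psd_matrix (matrix_inv P)" "symmetric_matrix (matrix_inv P)"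
    using pd_matrix_inv[OF pP sP] symmetric_matrix_inv[OF pP sP]
    by (simp_all add: pd_imp_psd_matrix)
  then have "0 \<le> \<delta>" unfolding \<delta>_def using sandwich_inner_nonneg by simp
  then have "0 < 1 + \<delta>" by simp
  have "psd_matrix ((1 + \<delta>) *\<^sub>R P - Q)"
    using psd_matrix_scaleR_minus[OF pP sP sQ] by (simp add: \<delta>_def)
  then have "psd_matrix (matrix_inv Q - matrix_inv ((1 + \<delta>) *\<^sub>R P))"
    by (rule psd_matrix_inv_antimono[OF pQ sQ pd_matrix_scaleR[OF pP \<open>0 < 1 + \<delta>\<close>]])
  also have "matrix_inv ((1 + \<delta>) *\<^sub>R P) = (1 / (1 + \<delta>)) *\<^sub>R matrix_inv P"
    using matrix_inv_scaleR[OF pP, of "1 + \<delta>"] \<open>0 \<le> \<delta>\<close> by simp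
  finally show ?thesis .
qed

text \<open>The self-concordance inequality of \<open>-ln det\<close>; \<open>b\<close> is the squared local norm of
  \<open>Q - P\<close> at \<open>P\<close>.\<close>

lemma inner_inv_diff_le:
  fixes P Q :: "real^'k::finite^'k"
  assumes pP: "pd_matrix P" and sP: "symmetric_matrix P" and pQ: "pd_matrix Q"
    and sQ: "symmetric_matrix Q"
  defines "b \<equiv> sandwich_inner (matrix_inv P) (Q - P) (Q - P)"
  shows "(matrix_inv Q - matrix_inv P) \<bullet> (Q - P) \<le> - b / (1 + sqrt b)"
proof -
  define X Y D where "X = matrix_inv P" and "Y = matrix_inv Q" and "D = Q - P"
  have sX: "symmetric_matrix X" and pX: "psd_matrix X"
    using symmetric_matrix_inv[OF pP sP] pd_matrix_inv[OF pP sP]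
    by (auto simp: X_def pd_imp_psd_matrix)
  have sY: "symmetric_matrix Y" using symmetric_matrix_inv[OF pQ sQ] by (simp add: Y_def)
  have sD: "symmetric_matrix D" using sP sQ by (simp add: D_def symmetric_matrix_diff)
  have "psd_matrix (Y - (1 / (1 + sqrt b)) *\<^sub>R X)"
    using psd_matrix_inv_diff_scaleR[OF pP sP pQ sQ] by (simp add: X_def Y_def b_def)
  moreover have "symmetric_matrix (Y - (1 / (1 + sqrt b)) *\<^sub>R X)"
    using sY sX by (simp add: symmetric_matrix_diff symmetric_matrix_scaleR)
  ultimately have "0 \<le> (Y - (1 / (1 + sqrt b)) *\<^sub>R X) \<bullet> (D ** X ** D)"
    by (rule inner_psd_matrix_nonneg[OF _ _ psd_matrix_congruence[OF pX sD]])
  moreover have "X \<bullet> (D ** X ** D) = b"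
    using inner_matrix_mult_cyclic[OF sX sD, of X]
    by (simp add: b_def sandwich_inner_def X_def D_def)
  ultimately have ineq: "(1 / (1 + sqrt b)) * b \<le> Y \<bullet> (D ** X ** D)"
    by (simp add: inner_diff_left)
  have "Y ** D ** X = X - Y"
    by (simp add: D_def matrix_diff_ldistrib matrix_diff_rdistrib matrix_mul_assoc[symmetric]
        X_def Y_def pd_matrix_mult_inv pP pQ)
  then have "(Y - X) \<bullet> D = - ((Y ** D ** X) \<bullet> D)" by (simp add: inner_diff_left)
  also have "\<dots> = - (Y \<bullet> (D ** X ** D))" by (simp add: inner_matrix_mult_cyclic[OF sX sD])
  also have "\<dots> \<le> - ((1 / (1 + sqrt b)) * b)" using ineq by simp
  finally show ?thesis by (simp add: X_def Y_def D_def)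
qed

text \<open>If \<open>M\<close> tends to a singular matrix with kernel vector \<open>a\<close> while \<open>N\<close> stays fixed,
  this forces \<open>\<langle>M\<inverse>, N\<rangle>\<close> to blow up.\<close>

lemma inner_matrix_inv_lower_bound:
  fixes M N :: "real^'k::finite^'k"
  assumes pM: "pd_matrix M" and sM: "symmetric_matrix M" and pN: "pd_matrix N"
    and sN: "symmetric_matrix N" and "a \<noteq> 0"
  shows "(a \<bullet> a)^2 \<le> (matrix_inv M \<bullet> N) * (quad_form (matrix_inv N) a * quad_form M a)"
proof -
  define t where "t = quad_form (matrix_inv N) a"
  define s where "s = quad_form (matrix_inv M) a"
  have "0 < t" using pd_matrix_inv[OF pN sN] \<open>a \<noteq> 0\<close> by (simp add: pd_matrix_def t_def)
  have "psd_matrix (N - (1/t) *\<^sub>R outer_prod a a)"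
    unfolding psd_matrix_def
  proof
    fix x
    have "(x \<bullet> (N *v (matrix_inv N *v a)))^2 \<le> quad_form N x * quad_form N (matrix_inv N *v a)"
      by (rule psd_matrix_cauchy_schwarz[OF pd_imp_psd_matrix[OF pN] sN])
    then have "(x \<bullet> a)^2 \<le> quad_form N x * t"
      by (simp add: pd_matrix_inv_mult_vector pN quad_form_def t_def inner_commute)
    then have "(1/t) * (a \<bullet> x)^2 \<le> quad_form N x"
      using \<open>0 < t\<close> by (simp add: field_simps inner_commute)
    then show "0 \<le> quad_form (N - (1/t) *\<^sub>R outer_prod a a) x"
      by (simp add: quad_form_diff quad_form_scaleR quad_form_outer_prod)
  qed
  then have "0 \<le> matrix_inv M \<bullet> (N - (1/t) *\<^sub>R outer_prod a a)"
    by (rule inner_psd_matrix_nonneg[OF pd_imp_psd_matrix[OF pd_matrix_inv[OF pM sM]]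
          symmetric_matrix_inv[OF pM sM]])
  then have st: "s / t \<le> matrix_inv M \<bullet> N"
    by (simp add: inner_diff_right inner_outer_prod s_def quad_form_def)
  have "(a \<bullet> (M *v (matrix_inv M *v a)))^2 \<le> quad_form M a * quad_form M (matrix_inv M *v a)"
    by (rule psd_matrix_cauchy_schwarz[OF pd_imp_psd_matrix[OF pM] sM])
  then have "(a \<bullet> a)^2 \<le> quad_form M a * s"
    by (simp add: pd_matrix_inv_mult_vector pM quad_form_def s_def inner_commute)
  also have "\<dots> \<le> quad_form M a * (t * (matrix_inv M \<bullet> N))"
    using st \<open>0 < t\<close> pd_imp_psd_matrix[OF pM]
    by (intro mult_left_mono) (auto simp: field_simps psd_matrix_def)
  finally show ?thesis by (simp add: t_def mult_ac)
qed

subsection \<open>Continuity of the matrix inverse\<close>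

lemma norm_matrix_vector_mult_le:
  "norm ((E::real^'k^'k) *v a) \<le> real CARD('k) * real CARD('k) * norm E * norm a"
proof -
  have "norm (E *v a) \<le> onorm ((*v) E) * norm a"
    by (rule onorm) (simp add: linear_conv_bounded_linear)
  also have "onorm ((*v) E) \<le> real CARD('k) * real CARD('k) * norm E"
    by (rule onorm_le_matrix_component)
      (rule order_trans[OF component_le_norm_cart Finite_Cartesian_Product.norm_nth_le])
  finally show ?thesis by (simp add: mult_right_mono)
qed

lemma norm_matrix_le_columns:
  "norm (D::real^'k^'k) \<le> real CARD('k) * (\<Sum>j\<in>UNIV. norm (D *v axis j 1))"
proof -
  have "norm D \<le> (\<Sum>i\<in>UNIV. norm (D$i))" unfolding norm_vec_def by (rule L2_set_le_sum) simp
  also have "\<dots> \<le> (\<Sum>i\<in>UNIV. \<Sum>j\<in>UNIV. \<bar>D$i$j\<bar>)" by (intro sum_mono norm_le_l1_cart)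
  also have "\<dots> \<le> (\<Sum>i\<in>(UNIV::'k set). \<Sum>j\<in>UNIV. norm (D *v axis j 1))"
    by (intro sum_mono) (metis component_le_norm_cart matrix_vector_mult_axis)
  also have "\<dots> = real CARD('k) * (\<Sum>j\<in>UNIV. norm (D *v axis j 1))" by simp
  finally show ?thesis .
qed

lemma pd_matrix_lower_bound:
  fixes M :: "real^'k::finite^'k"
  assumes "pd_matrix M"
  obtains e where "e > 0" "\<And>a. e * (a \<bullet> a) \<le> quad_form M a"
proof -
  let ?S = "sphere (0::real^'k) 1"
  have "?S \<noteq> {}" by (simp add: sphere_def) (metis norm_axis_1)
  moreover have "continuous_on ?S (quad_form M)"
    unfolding quad_form_def
    by (intro continuous_intros linear_continuous_on)
      (simp add: linear_conv_bounded_linear[symmetric])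
  ultimately obtain a0 where "a0 \<in> ?S" and min: "\<And>y. y \<in> ?S \<Longrightarrow> quad_form M a0 \<le> quad_form M y"
    using continuous_attains_inf[OF compact_sphere] by metis
  then have "a0 \<noteq> 0" by auto
  then have "0 < quad_form M a0" using assms by (simp add: pd_matrix_def)
  moreover have "quad_form M a0 * (a \<bullet> a) \<le> quad_form M a" for a
  proof (cases "a = 0")
    case True then show ?thesis by (simp add: quad_form_def)
  next
    case False
    then have "quad_form M a0 \<le> quad_form M ((1 / norm a) *\<^sub>R a)" by (intro min) simp
    also have "\<dots> = quad_form M a / (norm a)^2"
      by (simp add: quad_form_def power2_eq_square matrix_vector_mult_scaleR)
    finally show ?thesis using False by (simp add: field_simps power2_norm_eq_inner)
  qed
  ultimately show ?thesis by (rule that)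
qed

lemma norm_matrix_inv_mult_vector_le:
  fixes N :: "real^'k::finite^'k"
  assumes "\<And>a. e * (a \<bullet> a) \<le> quad_form N a" "0 < e" "invertible N"
  shows "norm (matrix_inv N *v b) \<le> norm b / e"
proof -
  define z where "z = matrix_inv N *v b"
  have "N *v z = b" by (simp add: z_def matrix_vector_mul_assoc matrix_inv_right[OF assms(3)])
  then have "e * (norm z)^2 \<le> z \<bullet> b"
    using assms(1)[of z] by (simp add: power2_norm_eq_inner quad_form_def)
  also have "\<dots> \<le> norm z * norm b" by (simp add: Cauchy_Schwarz_ineq2 abs_le_D1)
  finally have "(e * norm z) * norm z \<le> norm b * norm z" by (simp add: power2_eq_square mult_ac)
  then have "e * norm z \<le> norm b"
    by (cases "z = 0") (simp_all add: mult_le_cancel_right_pos)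
  then show ?thesis using assms(2) by (simp add: z_def pos_le_divide_eq mult.commute)
qed

lemma pd_matrix_lower_bound_perturb:
  fixes M N :: "real^'k::finite^'k"
  assumes "\<And>a. e * (a \<bullet> a) \<le> quad_form M a"
    and "real CARD('k) * real CARD('k) * norm (N - M) \<le> e / 2"
  shows "(e / 2) * (a \<bullet> a) \<le> quad_form N a"
proof -
  let ?K = "real CARD('k) * real CARD('k)"
  have "\<bar>quad_form N a - quad_form M a\<bar> = \<bar>a \<bullet> ((N - M) *v a)\<bar>"
    by (simp add: quad_form_def matrix_vector_mult_diff_rdistrib inner_diff_right)
  also have "\<dots> \<le> norm a * norm ((N - M) *v a)" by (rule Cauchy_Schwarz_ineq2)
  also have "\<dots> \<le> norm a * (?K * norm (N - M) * norm a)"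
    by (intro mult_left_mono norm_matrix_vector_mult_le) simp
  also have "\<dots> = ?K * norm (N - M) * (a \<bullet> a)"
    by (simp add: power2_norm_eq_inner[symmetric] power2_eq_square)
  also have "\<dots> \<le> (e / 2) * (a \<bullet> a)" using assms(2) by (intro mult_right_mono) simp_all
  finally show ?thesis using assms(1)[of a] by linarith
qed

lemma pd_matrix_if_lower_bound:
  fixes N :: "real^'k^'k"
  assumes "0 < e" "\<And>a. e * (a \<bullet> a) \<le> quad_form N a"
  shows "pd_matrix N"
  unfolding pd_matrix_def
proof (intro allI impI)
  fix a :: "real^'k" assume "a \<noteq> 0"
  then have "0 < e * (a \<bullet> a)" using \<open>0 < e\<close> by simp
  then show "0 < quad_form N a" using assms(2)[of a] by linarith
qed

lemma norm_matrix_inv_diff_le: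
  fixes M N :: "real^'k::finite^'k"
  assumes "0 < e" and eM: "\<And>a. e * (a \<bullet> a) \<le> quad_form M a"
    and eN: "\<And>a. (e / 2) * (a \<bullet> a) \<le> quad_form N a"
  defines "K \<equiv> real CARD('k) * real CARD('k)"
  shows "norm (matrix_inv N - matrix_inv M) \<le> (2 * K * K / (e * e)) * norm (N - M)"
proof -
  have iM: "invertible M" and iN: "invertible N"
    using pd_matrix_if_lower_bound[OF _ eM] pd_matrix_if_lower_bound[OF _ eN] \<open>0 < e\<close>
    by (simp_all add: pd_matrix_invertible)
  define D where "D = matrix_inv N - matrix_inv M"
  have "D = matrix_inv N ** (M - N) ** matrix_inv M"
    by (simp add: D_def matrix_diff_ldistrib matrix_diff_rdistrib matrix_mul_assoc[symmetric]
        matrix_inv_right[OF iM]) (simp add: matrix_mul_assoc matrix_inv_left[OF iN])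
  then have D: "D *v b = matrix_inv N *v ((M - N) *v (matrix_inv M *v b))" for b
    by (simp add: matrix_vector_mul_assoc matrix_mul_assoc)
  have col: "norm (D *v axis j 1) \<le> 2 * K / (e * e) * norm (N - M)" for j
  proof -
    have "norm (D *v axis j 1) \<le> norm ((M - N) *v (matrix_inv M *v axis j 1)) / (e / 2)"
      unfolding D by (rule norm_matrix_inv_mult_vector_le) (use eN \<open>0 < e\<close> iN in auto)
    also have "\<dots> \<le> K * norm (M - N) * norm (matrix_inv M *v axis j 1) / (e / 2)"
      using norm_matrix_vector_mult_le[of "M - N"] \<open>0 < e\<close>
      by (intro divide_right_mono) (simp_all add: K_def)
    also have "\<dots> \<le> K * norm (M - N) * (1 / e) / (e / 2)"
      using norm_matrix_inv_mult_vector_le[OF eM \<open>0 < e\<close> iM, of "axis j 1"] \<open>0 < e\<close>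
      by (intro divide_right_mono mult_left_mono) (simp_all add: K_def)
    also have "\<dots> = 2 * K / (e * e) * norm (N - M)" by (simp add: norm_minus_commute field_simps)
    finally show ?thesis .
  qed
  have "norm D \<le> real CARD('k) * (\<Sum>j\<in>UNIV. norm (D *v axis j 1))"
    by (rule norm_matrix_le_columns)
  also have "\<dots> \<le> real CARD('k) * (\<Sum>j\<in>(UNIV::'k set). 2 * K / (e * e) * norm (N - M))"
    by (intro mult_left_mono sum_mono col) simp
  also have "\<dots> = (2 * K * K / (e * e)) * norm (N - M)" by (simp add: K_def)
  finally show ?thesis by (simp add: D_def)
qed

lemma pd_matrix_inv_local_lipschitz:
  fixes M :: "real^'k::finite^'k"
  assumes "pd_matrix M"
  obtains r C where "r > 0" "\<And>N. norm (N - M) < r \<Longrightarrow>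
    pd_matrix N \<and> norm (matrix_inv N - matrix_inv M) \<le> C * norm (N - M)"
proof -
  obtain e where "e > 0" and eM: "\<And>a. e * (a \<bullet> a) \<le> quad_form M a"
    using pd_matrix_lower_bound[OF assms] by blast
  define K where "K = real CARD('k) * real CARD('k)"
  have "K > 0" by (simp add: K_def)
  have "pd_matrix N \<and> norm (matrix_inv N - matrix_inv M) \<le> (2 * K * K / (e * e)) * norm (N - M)"
    if "norm (N - M) < e / (2 * K)" for N
  proof
    have "K * norm (N - M) \<le> e / 2" using that \<open>K > 0\<close> by (simp add: field_simps)
    then have eN: "(e / 2) * (a \<bullet> a) \<le> quad_form N a" for a
      using pd_matrix_lower_bound_perturb[OF eM] by (simp add: K_def)
    then show "pd_matrix N" using \<open>e > 0\<close> by (intro pd_matrix_if_lower_bound[of "e / 2"]) auto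
    show "norm (matrix_inv N - matrix_inv M) \<le> (2 * K * K / (e * e)) * norm (N - M)"
      unfolding K_def by (rule norm_matrix_inv_diff_le[OF \<open>e > 0\<close> eM eN])
  qed
  moreover have "e / (2 * K) > 0" using \<open>e > 0\<close> \<open>K > 0\<close> by simp
  ultimately show ?thesis using that by blast
qed

lemma open_pd_matrices: "open {M::real^'k::finite^'k. pd_matrix M}"
  unfolding open_contains_ball
proof
  fix M :: "real^'k^'k" assume "M \<in> {M. pd_matrix M}"
  then have "pd_matrix M" by simp
  then obtain r C where "r > 0" and "\<And>N. norm (N - M) < r \<Longrightarrow>
      pd_matrix N \<and> norm (matrix_inv N - matrix_inv M) \<le> C * norm (N - M)"
    using pd_matrix_inv_local_lipschitz by blast
  then show "\<exists>e>0. ball M e \<subseteq> {M. pd_matrix M}"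
    by (intro exI[of _ r]) (auto simp: dist_norm norm_minus_commute)
qed

lemma isCont_matrix_inv:
  fixes M :: "real^'k::finite^'k"
  assumes "pd_matrix M"
  shows "isCont matrix_inv M"
proof -
  obtain r C where "r > 0" and lip: "\<And>N. norm (N - M) < r \<Longrightarrow>
      pd_matrix N \<and> norm (matrix_inv N - matrix_inv M) \<le> C * norm (N - M)"
    using pd_matrix_inv_local_lipschitz[OF assms] by blast
  have "eventually (\<lambda>N. norm (N - M) < r) (at M)"
    using eventually_at_ball[OF \<open>r > 0\<close>]
      by (rule eventually_mono) (simp add: dist_norm norm_minus_commute)
  then have "eventually (\<lambda>N. norm (matrix_inv N - matrix_inv M) \<le> C * norm (N - M)) (at M)"
    by (rule eventually_mono) (use lip in blast)
  moreover have "((\<lambda>N. C * norm (N - M)) \<longlongrightarrow> 0) (at M)"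
    using tendsto_norm_zero[OF LIM_zero[OF tendsto_ident_at]] by (rule tendsto_mult_right_zero)
  ultimately have "((\<lambda>N. matrix_inv N - matrix_inv M) \<longlongrightarrow> 0) (at M)"
    by (rule Lim_null_comparison)
  then show ?thesis unfolding isCont_def by (rule LIM_zero_cancel)
qed

section \<open>Polynomials\<close>

lemma smult_mp_eq_mult: "smult_mp a p = Poly_Mapping.single 0 a * p"
proof -
  have "(\<lambda>c. a * c) = (*) a" by (rule ext) simp
  then show ?thesis by (simp add: smult_mp_def mult_map_scale_conv_mult)
qed

lemma smult_mp_add_left: "smult_mp (a + b) p = smult_mp a p + smult_mp b p"
  and smult_mp_diff_left: "smult_mp (a - b) p = smult_mp a p - smult_mp b p"
  and smult_mp_zero_left [simp]: "smult_mp 0 p = 0"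
  and smult_mp_one [simp]: "smult_mp 1 p = p"
  and smult_mp_smult_mp: "smult_mp a (smult_mp b p) = smult_mp (a * b) p"
  and smult_mp_sum_right: "smult_mp a (sum f A) = (\<Sum>x\<in>A. smult_mp a (f x))"
  and mult_smult_mp_left: "smult_mp a p * q = smult_mp a (p * q)"
  and mult_smult_mp_right: "p * smult_mp a q = smult_mp a (p * (q::'v mpoly))"
  by (simp_all add: smult_mp_eq_mult single_add single_diff distrib_right left_diff_distrib
      sum_distrib_left sum_distrib_right distrib_left right_diff_distrib mult_single mult_ac
      flip: mult.assoc)

lemma sum_smult_mp_indicator:
  assumes "finite K" "k \<in> K"
  shows "(\<Sum>k'\<in>K. smult_mp (if k' = k then 1 else 0) (b k')) = b k"
proof -
  have "(\<Sum>k'\<in>K. smult_mp (if k' = k then 1 else 0) (b k')) = (\<Sum>k'\<in>K. if k' = k then b k else 0)"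
    by (rule sum.cong) auto
  also have "\<dots> = b k" using assms by simp
  finally show ?thesis .
qed

lemma mon_deg_add: "mon_deg ((a::'v::finite \<Rightarrow>\<^sub>0 nat) + b) = mon_deg a + mon_deg b"
proof -
  have "mon_deg m = (\<Sum>v\<in>UNIV. Poly_Mapping.lookup m v)" for m :: "'v \<Rightarrow>\<^sub>0 nat"
    unfolding mon_deg_def by (rule sum.mono_neutral_left) (auto simp: in_keys_iff)
  then show ?thesis by (simp add: lookup_add sum.distrib)
qed

lemma deg_le_mult:
  fixes f h :: "'v::finite mpoly"
  assumes "deg_le a f" "deg_le b h"
  shows "deg_le (a + b) (f * h)"
  unfolding deg_le_def
proof
  fix m assume "m \<in> Poly_Mapping.keys (f * h)"
  then obtain x y where "m = x + y" "x \<in> Poly_Mapping.keys f" "y \<in> Poly_Mapping.keys h"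
    using keys_mult by blast
  then show "mon_deg m \<le> a + b" using assms by (auto simp: deg_le_def mon_deg_add add_mono)
qed

lemma deg_le_zero [simp]: "deg_le d 0"
  by (simp add: deg_le_def)

lemma poly_mapping_sum_single:
  "f = (\<Sum>a\<in>Poly_Mapping.keys f. Poly_Mapping.single a (Poly_Mapping.lookup f a))"
proof (rule poly_mapping_eqI)
  fix k
  have "Poly_Mapping.lookup
      (\<Sum>a\<in>Poly_Mapping.keys f. Poly_Mapping.single a (Poly_Mapping.lookup f a)) k
      = (\<Sum>a\<in>Poly_Mapping.keys f. if a = k then Poly_Mapping.lookup f a else 0)"
    by (simp add: lookup_sum lookup_single when_def)
  also have "\<dots> = Poly_Mapping.lookup f k" by (simp add: in_keys_iff)
  finally show "Poly_Mapping.lookup f k =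
      Poly_Mapping.lookup
        (\<Sum>a\<in>Poly_Mapping.keys f. Poly_Mapping.single a (Poly_Mapping.lookup f a)) k"
    by simp
qed

text \<open>\<open>Poly_Mapping\<close> provides the \<open>idom\<close> instance only for linearly ordered monomials;
  an additive order embedding of the monomials suffices.\<close>

lemma lookup_mult_unique_sum:
  fixes f h :: "'a::comm_monoid_add \<Rightarrow>\<^sub>0 'c::semiring_0"
  assumes "A \<in> Poly_Mapping.keys f" "B \<in> Poly_Mapping.keys h"
    and unique: "\<And>a b. a \<in> Poly_Mapping.keys f \<Longrightarrow> b \<in> Poly_Mapping.keys h \<Longrightarrow>
      a + b = A + B \<longleftrightarrow> a = A \<and> b = B"
  shows "Poly_Mapping.lookup (f * h) (A + B) = Poly_Mapping.lookup f A * Poly_Mapping.lookup h B"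
proof -
  define F G where "F = Poly_Mapping.keys f" and "G = Poly_Mapping.keys h"
  have "f * h = (\<Sum>a\<in>F. Poly_Mapping.single a (Poly_Mapping.lookup f a)) *
      (\<Sum>b\<in>G. Poly_Mapping.single b (Poly_Mapping.lookup h b))"
    unfolding F_def G_def by (simp flip: poly_mapping_sum_single)
  also have "\<dots> = (\<Sum>a\<in>F. \<Sum>b\<in>G.
      Poly_Mapping.single (a + b) (Poly_Mapping.lookup f a * Poly_Mapping.lookup h b))"
    by (simp add: sum_product mult_single)
  finally have fh: "f * h = \<dots>" .
  have "Poly_Mapping.lookup (f * h) (A + B) = (\<Sum>a\<in>F. \<Sum>b\<in>G.
      if a = A \<and> b = B then Poly_Mapping.lookup f a * Poly_Mapping.lookup h b else 0)"
    unfolding fh lookup_sum lookup_single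
    by (intro sum.cong refl) (auto simp: when_def unique F_def G_def)
  also have "\<dots> = (\<Sum>a\<in>F. if a = A then Poly_Mapping.lookup f a * Poly_Mapping.lookup h B else 0)"
    by (intro sum.cong refl) (use assms(2) in \<open>auto simp: G_def if_distrib cong: if_cong\<close>)
  also have "\<dots> = Poly_Mapping.lookup f A * Poly_Mapping.lookup h B"
    using assms(1) by (simp add: F_def)
  finally show ?thesis .
qed

lemma mult_poly_mapping_neq_zero:
  fixes f h :: "'a::cancel_comm_monoid_add \<Rightarrow>\<^sub>0 'c::semiring_no_zero_divisors"
    and R :: "'a \<Rightarrow> 'b::{ordered_cancel_comm_monoid_add, linorder}"
  assumes "inj R" and R_add: "\<And>a b. R (a + b) = R a + R b"
    and "f \<noteq> 0" "h \<noteq> 0"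
  shows "f * h \<noteq> 0"
proof -
  define F G where "F = Poly_Mapping.keys f" and "G = Poly_Mapping.keys h"
  have F: "finite F" "F \<noteq> {}" and G: "finite G" "G \<noteq> {}"
    using assms(3,4) by (auto simp: F_def G_def)
  have "Max (R ` F) \<in> R ` F" using F by (intro Max_in) auto
  then obtain A where A: "A \<in> F" "R A = Max (R ` F)" by (metis imageE)
  have "Max (R ` G) \<in> R ` G" using G by (intro Max_in) auto
  then obtain B where B: "B \<in> G" "R B = Max (R ` G)" by (metis imageE)
  have top: "a + b = A + B \<longleftrightarrow> a = A \<and> b = B" if "a \<in> F" "b \<in> G" for a b
  proof
    assume ab: "a + b = A + B"
    have "R a = R A"
    proof (rule ccontr)
      assume "R a \<noteq> R A"
      then have "R a < R A" using that A F by (simp add: order_less_le)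
      moreover have "R b \<le> R B" using that B G by simp
      ultimately have "R a + R b < R A + R B" by (rule add_less_le_mono)
      then show False using ab by (simp flip: R_add)
    qed
    then have "a = A" using \<open>inj R\<close> by (simp add: inj_eq)
    then show "a = A \<and> b = B" using ab by simp
  qed simp
  have "Poly_Mapping.lookup (f * h) (A + B) = Poly_Mapping.lookup f A * Poly_Mapping.lookup h B"
    using A(1) B(1) top by (intro lookup_mult_unique_sum) (simp_all add: F_def G_def)
  also have "\<dots> \<noteq> 0" using A(1) B(1) by (simp add: F_def G_def in_keys_iff)
  finally show ?thesis by auto
qed

lemma mult_mpoly_neq_zero:
  fixes f h :: "'v::finite mpoly"
  assumes "f \<noteq> 0" "h \<noteq> 0"
  shows "f * h \<noteq> 0"
proof -
  obtain \<iota> :: "'v \<Rightarrow> nat" where "inj \<iota>"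
    using finite_imp_inj_to_nat_seg[of "UNIV :: 'v set"] by auto
  define R :: "('v \<Rightarrow>\<^sub>0 nat) \<Rightarrow> (nat \<Rightarrow>\<^sub>0 nat)" where
    "R m = Abs_poly_mapping (\<lambda>i. Poly_Mapping.lookup m (inv_into UNIV \<iota> i) when i \<in> range \<iota>)" for m
  have fin: "finite {i. (Poly_Mapping.lookup m (inv_into UNIV \<iota> i) when i \<in> range \<iota>) \<noteq> 0}" for m
    by (rule finite_subset[of _ "range \<iota>"]) (auto simp: when_def)
  have lookup_R:
    "Poly_Mapping.lookup (R m) i = (Poly_Mapping.lookup m (inv_into UNIV \<iota> i) when i \<in> range \<iota>)"
      for m i
    unfolding R_def by (subst lookup_Abs_poly_mapping[OF fin]) simp
  have "R (a + b) = R a + R b" for a b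
    by (rule poly_mapping_eqI) (simp add: lookup_R lookup_add when_def)
  moreover have "inj R"
  proof (rule injI, rule poly_mapping_eqI)
    fix a b v assume "R a = R b"
    then have "Poly_Mapping.lookup (R a) (\<iota> v) = Poly_Mapping.lookup (R b) (\<iota> v)" by simp
    then show "Poly_Mapping.lookup a v = Poly_Mapping.lookup b v" by (simp add: lookup_R \<open>inj \<iota>\<close>)
  qed
  ultimately show ?thesis using mult_poly_mapping_neq_zero assms by blast
qed

section \<open>The weighted sum-of-squares cone\<close>

locale wsos_barrier =
  fixes g :: "'i::finite \<Rightarrow> 'v::finite mpoly" and d :: "'i \<Rightarrow> nat"
    and q :: "'u::finite \<Rightarrow> 'v mpoly"
    and blk :: "'k::finite \<Rightarrow> 'i" and p :: "'k \<Rightarrow> 'v mpoly"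
  assumes g_nonzero: "\<forall>i. g i \<noteq> 0"
    and q_basis: "is_basis_of q UNIV (Vspace g d)"
    and p_basis: "\<forall>i. is_basis_of p {k. blk k = i} {h. deg_le (d i) h}"
    and proper: "proper_cone (SigmaC q g d)"
begin

abbreviation Lam where "Lam \<equiv> LamM q g blk p"
abbreviation Lam_adj where "Lam_adj \<equiv> LamAdj q g blk p"
abbreviation Sig where "Sig \<equiv> SigmaC q g d"
abbreviation Sig_dual where "Sig_dual \<equiv> SigmaD q g d"

definition poly_of_coords :: "real^'u \<Rightarrow> 'v mpoly" where
  "poly_of_coords x = (\<Sum>u\<in>UNIV. smult_mp (x$u) (q u))"

lemma Vspace_eq_range: "Vspace g d = range poly_of_coords"
proof -
  have "Vspace g d = {(\<Sum>u\<in>UNIV. smult_mp (a u) (q u)) | a. True}"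
    using q_basis by (simp add: is_basis_of_def)
  also have "\<dots> = range poly_of_coords"
    by (auto simp: poly_of_coords_def intro: image_eqI[of _ _ "\<chi> u. _ u"])
  finally show ?thesis .
qed

lemma poly_of_coords_add: "poly_of_coords (x + y) = poly_of_coords x + poly_of_coords y"
  and poly_of_coords_diff: "poly_of_coords (x - y) = poly_of_coords x - poly_of_coords y"
  and poly_of_coords_scaleR: "poly_of_coords (c *\<^sub>R x) = smult_mp c (poly_of_coords x)"
  and poly_of_coords_zero [simp]: "poly_of_coords 0 = 0"
  by (simp_all add: poly_of_coords_def smult_mp_add_left smult_mp_diff_left sum.distrib
      sum_subtractf smult_mp_sum_right smult_mp_smult_mp)

lemma poly_of_coords_inj: "poly_of_coords x = poly_of_coords y \<Longrightarrow> x = y"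
proof -
  assume "poly_of_coords x = poly_of_coords y"
  then have "poly_of_coords (x - y) = 0" by (simp add: poly_of_coords_diff)
  then have "\<forall>u\<in>UNIV. (x - y)$u = 0"
    using q_basis unfolding is_basis_of_def poly_of_coords_def by blast
  then show "x = y" by (simp add: vec_eq_iff)
qed

lemma coordv_poly_of_coords [simp]: "coordv q (poly_of_coords x) = x"
  unfolding coordv_def
  by (rule the_equality) (auto simp: poly_of_coords_def[symmetric] intro: poly_of_coords_inj)

lemma poly_of_coords_coordv: "s \<in> Vspace g d \<Longrightarrow> poly_of_coords (coordv q s) = s"
  by (auto simp: Vspace_eq_range)

lemma Vspace_add: "s \<in> Vspace g d \<Longrightarrow> t \<in> Vspace g d \<Longrightarrow> s + t \<in> Vspace g d"
  by (auto simp: Vspace_eq_range simp flip: poly_of_coords_add)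

lemma Vspace_smult_mp: "s \<in> Vspace g d \<Longrightarrow> smult_mp c s \<in> Vspace g d"
  by (auto simp: Vspace_eq_range simp flip: poly_of_coords_scaleR)

lemma Vspace_zero: "0 \<in> Vspace g d"
  by (simp add: Vspace_eq_range) (metis rangeI poly_of_coords_zero)

lemma coordv_add:
  "s \<in> Vspace g d \<Longrightarrow> t \<in> Vspace g d \<Longrightarrow> coordv q (s + t) = coordv q s + coordv q t"
  by (auto simp: Vspace_eq_range simp flip: poly_of_coords_add)

lemma coordv_smult_mp: "s \<in> Vspace g d \<Longrightarrow> coordv q (smult_mp c s) = c *\<^sub>R coordv q s"
  by (auto simp: Vspace_eq_range simp flip: poly_of_coords_scaleR)

lemma coordv_zero [simp]: "coordv q 0 = 0"
  using coordv_poly_of_coords[of 0] by simp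

lemma coordv_eq_0_imp: "s \<in> Vspace g d \<Longrightarrow> coordv q s = 0 \<Longrightarrow> s = 0"
  using poly_of_coords_coordv by fastforce

lemma Vspace_sum: "(\<And>j. j \<in> A \<Longrightarrow> f j \<in> Vspace g d) \<Longrightarrow> sum f A \<in> Vspace g d"
  by (induction A rule: infinite_finite_induct) (auto simp: Vspace_zero Vspace_add)

lemma coordv_sum:
  "(\<And>j. j \<in> A \<Longrightarrow> f j \<in> Vspace g d) \<Longrightarrow> coordv q (sum f A) = (\<Sum>j\<in>A. coordv q (f j))"
proof (induction A rule: infinite_finite_induct)
  case (insert x F)
  then show ?case by (simp add: coordv_add Vspace_sum)
qed auto

lemma mult_g_in_Vspace: "deg_le (2 * d i) r \<Longrightarrow> g i * r \<in> Vspace g d"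
proof -
  assume "deg_le (2 * d i) r"
  define rs where "rs = (\<lambda>j. if j = i then r else 0)"
  have "(\<Sum>j\<in>UNIV. g j * rs j) = g i * r" by (simp add: rs_def if_distrib cong: if_cong)
  moreover have "\<forall>j. deg_le (2 * d j) (rs j)" using \<open>deg_le (2 * d i) r\<close> by (simp add: rs_def)
  ultimately show ?thesis unfolding Vspace_def by (intro CollectI exI[of _ rs]) simp
qed

definition block :: "'i \<Rightarrow> 'k set" where
  "block i = {k. blk k = i}"

definition block_poly :: "'i \<Rightarrow> real^'k \<Rightarrow> 'v mpoly" where
  "block_poly i a = (\<Sum>k\<in>block i. smult_mp (a$k) (p k))"

definition block_part :: "'i \<Rightarrow> real^'k \<Rightarrow> real^'k" where
  "block_part i a = (\<chi> k. if blk k = i then a$k else 0)"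

lemma deg_le_eq_block_span:
  "{h. deg_le (d i) h} = {(\<Sum>k\<in>block i. smult_mp (a k) (p k)) | a. True}"
  using p_basis unfolding is_basis_of_def block_def by blast

lemma deg_le_iff_block_poly: "deg_le (d i) h \<longleftrightarrow> (\<exists>a. h = block_poly i a)"
proof
  assume "deg_le (d i) h"
  then obtain c where "h = (\<Sum>k\<in>block i. smult_mp (c k) (p k))"
    using deg_le_eq_block_span by blast
  then have "h = block_poly i (\<chi> k. c k)" by (simp add: block_poly_def)
  then show "\<exists>a. h = block_poly i a" ..
next
  assume "\<exists>a. h = block_poly i a"
  then obtain a where "h = block_poly i a" ..
  then have "h \<in> {(\<Sum>k\<in>block i. smult_mp (c k) (p k)) | c. True}"
    unfolding block_poly_def by blast
  then show "deg_le (d i) h" unfolding deg_le_eq_block_span[symmetric] by simp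
qed

lemma block_poly_eq_0_imp: "block_poly (blk k) a = 0 \<Longrightarrow> a$k = 0"
proof -
  assume "block_poly (blk k) a = 0"
  then have "(\<Sum>k'\<in>{k'. blk k' = blk k}. smult_mp (a$k') (p k')) = 0"
    by (simp add: block_poly_def block_def)
  moreover have indep: "(\<Sum>k'\<in>{k'. blk k' = blk k}. smult_mp (c k') (p k')) = 0 \<Longrightarrow> c k = 0"
    for c using p_basis unfolding is_basis_of_def by blast
  ultimately show "a$k = 0" using indep[of "\<lambda>k'. a$k'"] by simp
qed

lemma deg_le_p: "deg_le (d (blk k)) (p k)"
proof -
  have "(\<Sum>k'\<in>block (blk k). smult_mp (if k' = k then 1 else 0) (p k')) = p k"
    by (intro sum_smult_mp_indicator) (auto simp: block_def)
  then have "p k \<in> {h. deg_le (d (blk k)) h}"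
    unfolding deg_le_eq_block_span by (intro CollectI exI[of _ "\<lambda>k'. if k' = k then 1 else 0"]) simp
  then show ?thesis by simp
qed

lemma g_p_p_in_Vspace: "blk k = i \<Longrightarrow> blk l = i \<Longrightarrow> g i * p k * p l \<in> Vspace g d"
  using deg_le_mult[OF deg_le_p[of k] deg_le_p[of l]] mult_g_in_Vspace[of i "p k * p l"]
  by (simp add: mult.assoc mult_2)

lemma g_square_in_Vspace: "deg_le (d i) h \<Longrightarrow> g i * (h * h) \<in> Vspace g d"
  using deg_le_mult[of "d i" h "d i" h] mult_g_in_Vspace[of i "h * h"] by (simp add: mult_2)

lemma g_block_poly_square:
  "g i * (block_poly i a * block_poly i a) =
    (\<Sum>k\<in>block i. \<Sum>l\<in>block i. smult_mp (a$k * a$l) (g i * p k * p l))"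
proof -
  have "g i * (smult_mp (a$k) (p k) * smult_mp (a$l) (p l)) =
      smult_mp (a$k * a$l) (g i * p k * p l)"
    for k l
    by (simp add: mult_smult_mp_left mult_smult_mp_right smult_mp_smult_mp mult_ac)
  moreover have "g i * (block_poly i a * block_poly i a) = (\<Sum>k\<in>block i. \<Sum>l\<in>block i.
      g i * (smult_mp (a$k) (p k) * smult_mp (a$l) (p l)))"
    unfolding block_poly_def sum_product by (simp only: sum_distrib_left)
  ultimately show ?thesis by simp
qed

lemma Lam_entry: "Lam x $ k $ l =
    (if blk k = blk l then x \<bullet> coordv q (g (blk k) * p k * p l) else 0)"
  by (simp add: LamM_def inner_vec_def)

lemma symmetric_Lam: "symmetric_matrix (Lam x)"
  unfolding symmetric_matrix_def transpose_def vec_eq_iff by (auto simp: LamM_def mult_ac)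

lemma linear_Lam: "linear Lam"
  by (rule linearI) (simp_all add: vec_eq_iff Lam_entry inner_add_left)

lemmas Lam_add = linear_add[OF linear_Lam]
  and Lam_diff = linear_diff[OF linear_Lam]
  and Lam_scaleR = linear_scale[OF linear_Lam]

lemma inner_Lam_adj: "Lam_adj M \<bullet> w = M \<bullet> Lam w"
proof -
  have Lam_expand: "Lam w $ k $ l = (\<Sum>u\<in>UNIV. w$u * Lam (axis u 1) $ k $ l)" for k l
    unfolding Lam_entry inner_axis' by (simp add: inner_vec_def)
  have "Lam_adj M \<bullet> w = (\<Sum>u\<in>UNIV. \<Sum>k\<in>UNIV. \<Sum>l\<in>UNIV. M$k$l * Lam (axis u 1) $ k $ l * w$u)"
    by (simp add: LamAdj_def inner_vec_def sum_distrib_right)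
  also have "\<dots> = (\<Sum>k\<in>UNIV. \<Sum>l\<in>UNIV. \<Sum>u\<in>UNIV. M$k$l * Lam (axis u 1) $ k $ l * w$u)"
    by (subst sum.swap) (rule sum.cong[OF refl], rule sum.swap)
  also have "\<dots> = M \<bullet> Lam w"
    by (simp add: inner_matrix_eq_sum Lam_expand sum_distrib_left mult_ac)
  finally show ?thesis .
qed

lemma linear_Lam_adj: "linear Lam_adj"
  by (rule linearI; rule vector_eq_rdot[THEN iffD1])
    (simp_all add: inner_Lam_adj inner_add_left Lam_add Lam_scaleR)

lemmas Lam_adj_add = linear_add[OF linear_Lam_adj]
  and Lam_adj_diff = linear_diff[OF linear_Lam_adj]
  and Lam_adj_scaleR = linear_scale[OF linear_Lam_adj]
  and Lam_adj_sum = linear_sum[OF linear_Lam_adj]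

lemma Lam_adj_transpose: "Lam_adj (transpose M) = Lam_adj M"
proof (rule vector_eq_rdot[THEN iffD1], rule allI)
  fix w
  have "transpose M \<bullet> Lam w = M \<bullet> transpose (Lam w)"
    by (simp add: inner_matrix_eq_sum transpose_def) (rule sum.swap)
  then show "Lam_adj (transpose M) \<bullet> w = Lam_adj M \<bullet> w"
    using symmetric_Lam[of w] by (simp add: inner_Lam_adj symmetric_matrix_def)
qed

lemma Lam_mult_block_part: "Lam x *v block_part i a = block_part i (Lam x *v a)"
proof -
  have "(Lam x *v block_part i a) $ k = block_part i (Lam x *v a) $ k" for k
  proof (cases "blk k = i")
    case True
    then have "(\<Sum>l\<in>UNIV. Lam x $ k $ l * (if blk l = i then a$l else 0)) =
        (\<Sum>l\<in>UNIV. Lam x $ k $ l * a$l)"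
      by (intro sum.cong refl) (auto simp: Lam_entry)
    then show ?thesis using True by (simp add: matrix_vector_mult_def block_part_def)
  next
    case False
    then have "(\<Sum>l\<in>UNIV. Lam x $ k $ l * (if blk l = i then a$l else 0)) = 0"
      by (intro sum.neutral) (auto simp: Lam_entry)
    then show ?thesis using False by (simp add: matrix_vector_mult_def block_part_def)
  qed
  then show ?thesis by (simp add: vec_eq_iff)
qed

lemma quad_form_Lam_blocks:
  "quad_form (Lam x) a = (\<Sum>i\<in>UNIV. quad_form (Lam x) (block_part i a))"
proof -
  have "a = (\<Sum>i\<in>UNIV. block_part i a)" by (simp add: vec_eq_iff block_part_def)
  then have "quad_form (Lam x) a = (\<Sum>i\<in>UNIV. block_part i a \<bullet> (Lam x *v a))"
    unfolding quad_form_def by (metis inner_sum_left)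
  also have "\<dots> = (\<Sum>i\<in>UNIV. quad_form (Lam x) (block_part i a))"
  proof (intro sum.cong refl)
    fix i
    have "block_part i a \<bullet> b = block_part i a \<bullet> block_part i b" for b
      by (simp add: inner_vec_def block_part_def) (intro sum.cong refl, auto)
    then show "block_part i a \<bullet> (Lam x *v a) = quad_form (Lam x) (block_part i a)"
      by (simp add: quad_form_def Lam_mult_block_part)
  qed
  finally show ?thesis .
qed

lemma inner_coordv_g_block_poly_square:
  "x \<bullet> coordv q (g i * (block_poly i a * block_poly i a)) = quad_form (Lam x) (block_part i a)"
proof -
  have V: "smult_mp c (g i * p k * p l) \<in> Vspace g d" if "k \<in> block i" "l \<in> block i" for k l c
    using that by (intro Vspace_smult_mp g_p_p_in_Vspace) (auto simp: block_def)
  have "coordv q (g i * (block_poly i a * block_poly i a)) =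
      (\<Sum>k\<in>block i. \<Sum>l\<in>block i. (a$k * a$l) *\<^sub>R coordv q (g i * p k * p l))"
    unfolding g_block_poly_square
    by (subst coordv_sum, intro Vspace_sum V, assumption+)
      (intro sum.cong refl, subst coordv_sum, rule V, assumption+,
        intro sum.cong refl coordv_smult_mp g_p_p_in_Vspace, auto simp: block_def)
  then have "x \<bullet> coordv q (g i * (block_poly i a * block_poly i a)) =
      (\<Sum>k\<in>block i. \<Sum>l\<in>block i. a$k * a$l * (x \<bullet> coordv q (g i * p k * p l)))"
    by (simp add: inner_sum_right)
  also have "\<dots> = (\<Sum>k\<in>UNIV. if blk k = i then (\<Sum>l\<in>UNIV. if blk l = i
      then a$k * a$l * (x \<bullet> coordv q (g i * p k * p l)) else 0) else 0)"
    by (simp add: sum.If_cases block_def)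
  also have "\<dots> = (\<Sum>k\<in>UNIV. \<Sum>l\<in>UNIV. block_part i a $ k * Lam x $ k $ l * block_part i a $ l)"
    by (intro sum.cong refl) (auto simp: block_part_def Lam_entry mult_ac intro!: sum.cong)
  also have "\<dots> = quad_form (Lam x) (block_part i a)"
    by (simp add: quad_form_def inner_matrix_vector_mult_eq_sum)
  finally show ?thesis .
qed

lemma g_square_in_WSOS: "deg_le (d i) h \<Longrightarrow> g i * (h * h) \<in> WSOS g d"
proof -
  assume h: "deg_le (d i) h"
  define \<sigma> where "\<sigma> = (\<lambda>j. if j = i then h * h else 0)"
  have "(\<Sum>j\<in>UNIV. g j * \<sigma> j) = g i * (h * h)" by (simp add: \<sigma>_def if_distrib cong: if_cong)
  moreover have "sos_le (d j) (\<sigma> j)" for j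
    using h unfolding sos_le_def \<sigma>_def
    by (cases "j = i") (auto intro: exI[of _ "[h]"] exI[of _ "[]"])
  ultimately show ?thesis unfolding WSOS_def by (intro CollectI exI[of _ \<sigma>]) simp
qed

lemma sum_g_block_poly_squares_in_WSOS:
  "(\<Sum>i\<in>UNIV. g i * (block_poly i a * block_poly i a)) \<in> WSOS g d"
proof -
  have "sos_le (d i) (block_poly i a * block_poly i a)" for i
    unfolding sos_le_def using deg_le_iff_block_poly by (intro exI[of _ "[block_poly i a]"]) auto
  then show ?thesis
    unfolding WSOS_def by (intro CollectI exI[of _ "\<lambda>i. block_poly i a * block_poly i a"]) simp
qed

lemma g_sos_in_Vspace_and_nonneg:
  assumes "sos_le (d i) \<sigma>" "psd_matrix (Lam x)"
  shows "g i * \<sigma> \<in> Vspace g d \<and> 0 \<le> x \<bullet> coordv q (g i * \<sigma>)"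
proof -
  obtain hs where hs: "\<forall>h\<in>set hs. deg_le (d i) h" and \<sigma>: "\<sigma> = sum_list (map (\<lambda>h. h * h) hs)"
    using assms(1) unfolding sos_le_def by blast
  have "g i * sum_list (map (\<lambda>h. h * h) hs) \<in> Vspace g d \<and>
      0 \<le> x \<bullet> coordv q (g i * sum_list (map (\<lambda>h. h * h) hs))"
    using hs
  proof (induction hs)
    case Nil
    then show ?case by (simp add: Vspace_zero)
  next
    case (Cons h hs)
    then have "deg_le (d i) h" by simp
    then obtain a where "h = block_poly i a" using deg_le_iff_block_poly by blast
    then have "0 \<le> x \<bullet> coordv q (g i * (h * h))"
      using assms(2) by (simp add: inner_coordv_g_block_poly_square psd_matrix_def)
    then show ?case
      using Cons g_square_in_Vspace[OF \<open>deg_le (d i) h\<close>]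
      by (simp add: distrib_left Vspace_add coordv_add inner_add_right)
  qed
  then show ?thesis by (simp add: \<sigma>)
qed

lemma psd_Lam_imp_Sig_dual: "psd_matrix (Lam x) \<Longrightarrow> x \<in> Sig_dual"
  unfolding SigmaD_def dual_cone_def SigmaC_def WSOS_def
proof clarsimp
  fix \<sigma> :: "'i \<Rightarrow> 'v mpoly" assume psd: "psd_matrix (Lam x)" and sos: "\<forall>i. sos_le (d i) (\<sigma> i)"
  have each: "g i * \<sigma> i \<in> Vspace g d \<and> 0 \<le> x \<bullet> coordv q (g i * \<sigma> i)" for i
    using g_sos_in_Vspace_and_nonneg sos psd by blast
  then show "0 \<le> x \<bullet> coordv q (\<Sum>i\<in>UNIV. g i * \<sigma> i)"
    by (simp add: coordv_sum inner_sum_right sum_nonneg)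
qed

lemma Sig_dual_imp_psd_Lam: "x \<in> Sig_dual \<Longrightarrow> psd_matrix (Lam x)"
  unfolding psd_matrix_def
proof
  fix a assume x: "x \<in> Sig_dual"
  have "0 \<le> quad_form (Lam x) (block_part i a)" for i
  proof -
    have "coordv q (g i * (block_poly i a * block_poly i a)) \<in> Sig"
      unfolding SigmaC_def by (intro imageI g_square_in_WSOS) (auto simp: deg_le_iff_block_poly)
    then show ?thesis
      using x by (simp add: SigmaD_def dual_cone_def flip: inner_coordv_g_block_poly_square)
  qed
  then show "0 \<le> quad_form (Lam x) a" by (subst quad_form_Lam_blocks) (simp add: sum_nonneg)
qed

lemma Sig_dual_iff_psd_Lam: "x \<in> Sig_dual \<longleftrightarrow> psd_matrix (Lam x)"
  using Sig_dual_imp_psd_Lam psd_Lam_imp_Sig_dual by blast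

lemma Lam_adj_outer_prod:
  "Lam_adj (outer_prod a a) = coordv q (\<Sum>i\<in>UNIV. g i * (block_poly i a * block_poly i a))"
proof (rule vector_eq_rdot[THEN iffD1], rule allI)
  fix w
  have V: "g i * (block_poly i a * block_poly i a) \<in> Vspace g d" for i
    by (rule g_square_in_Vspace) (auto simp: deg_le_iff_block_poly)
  have "Lam_adj (outer_prod a a) \<bullet> w = quad_form (Lam w) a"
    by (simp only: inner_Lam_adj inner_commute[of "outer_prod a a"] inner_outer_prod quad_form_def)
  also have "\<dots> = (\<Sum>i\<in>UNIV. w \<bullet> coordv q (g i * (block_poly i a * block_poly i a)))"
    by (subst quad_form_Lam_blocks) (simp only: inner_coordv_g_block_poly_square)
  also have "\<dots> = coordv q (\<Sum>i\<in>UNIV. g i * (block_poly i a * block_poly i a)) \<bullet> w"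
    unfolding coordv_sum[OF V] inner_sum_left by (simp only: inner_commute)
  finally show "Lam_adj (outer_prod a a) \<bullet> w =
      coordv q (\<Sum>i\<in>UNIV. g i * (block_poly i a * block_poly i a)) \<bullet> w" .
qed

lemma Lam_adj_outer_prod_in_Sig: "Lam_adj (outer_prod a a) \<in> Sig"
  unfolding Lam_adj_outer_prod SigmaC_def using sum_g_block_poly_squares_in_WSOS by blast

lemma Sig_cone: "Convex.cone Sig" and convex_Sig: "convex Sig"
  and interior_Sig_nonempty: "interior Sig \<noteq> {}"
  using proper by (auto simp: proper_cone_def)

lemma Sig_scaleR: "s \<in> Sig \<Longrightarrow> 0 \<le> c \<Longrightarrow> c *\<^sub>R s \<in> Sig"
  using Sig_cone by (simp add: Convex.cone_def)

lemma Sig_add: "s \<in> Sig \<Longrightarrow> t \<in> Sig \<Longrightarrow> s + t \<in> Sig"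
proof -
  assume "s \<in> Sig" "t \<in> Sig"
  then have "(1/2) *\<^sub>R s + (1/2) *\<^sub>R t \<in> Sig" by (intro convexD[OF convex_Sig]) auto
  then have "2 *\<^sub>R ((1/2) *\<^sub>R s + (1/2) *\<^sub>R t) \<in> Sig" by (rule Sig_scaleR) simp
  then show "s + t \<in> Sig" by (simp add: scaleR_add_right)
qed

lemma Sig_zero: "0 \<in> Sig"
proof -
  obtain z where "z \<in> Sig" using interior_Sig_nonempty interior_subset by blast
  then show ?thesis using Sig_scaleR[of z 0] by simp
qed

lemma Sig_sum: "(\<And>j. j \<in> A \<Longrightarrow> f j \<in> Sig) \<Longrightarrow> sum f A \<in> Sig"
  by (induction A rule: infinite_finite_induct) (auto simp: Sig_zero Sig_add)

lemma Lam_adj_psd_in_Sig: "psd_matrix M \<Longrightarrow> symmetric_matrix M \<Longrightarrow> Lam_adj M \<in> Sig"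
proof -
  assume "psd_matrix M" "symmetric_matrix M"
  then obtain n :: nat and v where "M = (\<Sum>j<n. outer_prod (v j) (v j))"
    using psd_matrix_sum_outer_prods by blast
  then show "Lam_adj M \<in> Sig" by (simp add: Lam_adj_sum Sig_sum Lam_adj_outer_prod_in_Sig)
qed

lemma Sig_dual_inner_nonneg: "x \<in> Sig_dual \<Longrightarrow> s \<in> Sig \<Longrightarrow> 0 \<le> x \<bullet> s"
  by (simp add: SigmaD_def dual_cone_def)

lemma Lam_eq_0_imp: "Lam w = 0 \<Longrightarrow> w = 0"
proof (rule ccontr)
  assume "Lam w = 0" "w \<noteq> 0"
  then have "w \<in> Sig_dual" "- w \<in> Sig_dual"
    by (simp_all add: Sig_dual_iff_psd_Lam linear_neg[OF linear_Lam] psd_matrix_def quad_form_def)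
  then have orth: "w \<bullet> s = 0" if "s \<in> Sig" for s
    using that Sig_dual_inner_nonneg[of w s] Sig_dual_inner_nonneg[of "- w" s] by simp
  obtain z e where "e > 0" and ball: "ball z e \<subseteq> Sig"
    using interior_Sig_nonempty by (metis all_not_in_conv mem_interior)
  define c where "c = e / (2 * norm w)"
  have "c > 0" using \<open>e > 0\<close> \<open>w \<noteq> 0\<close> by (simp add: c_def)
  have "z + c *\<^sub>R w \<in> ball z e" using \<open>e > 0\<close> \<open>w \<noteq> 0\<close> by (simp add: c_def dist_norm)
  then have "w \<bullet> (z + c *\<^sub>R w) = 0" using ball orth by blast
  moreover have "w \<bullet> z = 0" using orth ball \<open>e > 0\<close> by (simp add: subset_iff)
  ultimately have "c * (w \<bullet> w) = 0" by (simp add: inner_add_right)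
  then show False using \<open>c > 0\<close> \<open>w \<noteq> 0\<close> by simp
qed

lemma surj_Lam_adj: "surj Lam_adj"
proof -
  have "adjoint Lam = Lam_adj"
    by (rule adjoint_unique) (metis inner_Lam_adj inner_commute)
  moreover have "inj Lam" using Lam_eq_0_imp linear_Lam by (metis linear_injective_0)
  ultimately show ?thesis using surj_adjoint_iff_inj[OF linear_Lam] by simp
qed

lemma isCont_Lam: "isCont Lam x"
  by (rule linear_continuous_at) (simp add: linear_Lam linear_conv_bounded_linear[symmetric])

lemma pd_Lam_imp_interior_Sig_dual: "pd_matrix (Lam x) \<Longrightarrow> x \<in> interior Sig_dual"
proof -
  assume "pd_matrix (Lam x)"
  have "open (Lam -` {M. pd_matrix M})"
    using continuous_open_vimage[OF open_pd_matrices isCont_Lam] by simp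
  moreover have "Lam -` {M. pd_matrix M} \<subseteq> Sig_dual"
    using psd_Lam_imp_Sig_dual pd_imp_psd_matrix by auto
  ultimately show ?thesis using \<open>pd_matrix (Lam x)\<close> by (intro interiorI) auto
qed

lemma interior_Sig_dual_inner_pos:
  assumes "x \<in> interior Sig_dual" "s \<in> Sig" "s \<noteq> 0"
  shows "0 < x \<bullet> s"
proof -
  obtain e where "e > 0" and ball: "ball x e \<subseteq> Sig_dual" using assms(1) mem_interior by blast
  define y where "y = x - (e / (2 * norm s)) *\<^sub>R s"
  have "y \<in> ball x e" using \<open>e > 0\<close> assms(3) by (simp add: y_def dist_norm)
  then have "0 \<le> y \<bullet> s" using ball assms(2) Sig_dual_inner_nonneg by blast
  also have "y \<bullet> s = x \<bullet> s - e * norm s / 2"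
    using assms(3)
      by (simp add: y_def inner_diff_left power2_norm_eq_inner[symmetric] power2_eq_square)
  moreover have "0 < e * norm s / 2" using \<open>e > 0\<close> assms(3) by simp
  ultimately show ?thesis by linarith
qed

lemma coordv_g_block_poly_square_neq_0:
  assumes "a$k \<noteq> 0"
  shows "coordv q (g (blk k) * (block_poly (blk k) a * block_poly (blk k) a)) \<noteq> 0"
proof
  let ?i = "blk k"
  assume "coordv q (g ?i * (block_poly ?i a * block_poly ?i a)) = 0"
  then have "g ?i * (block_poly ?i a * block_poly ?i a) = 0"
    by (intro coordv_eq_0_imp g_square_in_Vspace) (auto simp: deg_le_iff_block_poly)
  then have "block_poly ?i a = 0" using g_nonzero mult_mpoly_neq_zero by metis
  then show False using assms block_poly_eq_0_imp by blast
qed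

lemma interior_Sig_dual_imp_pd_Lam:
  assumes x: "x \<in> interior Sig_dual"
  shows "pd_matrix (Lam x)"
  unfolding pd_matrix_def
proof (intro allI impI)
  fix a :: "real^'k" assume "a \<noteq> 0"
  then obtain k where "a$k \<noteq> 0" by (metis vec_eq_iff zero_index)
  have psd: "psd_matrix (Lam x)" using x interior_subset Sig_dual_imp_psd_Lam by blast
  show "0 < quad_form (Lam x) a"
  proof (rule ccontr)
    assume "\<not> 0 < quad_form (Lam x) a"
    then have "quad_form (Lam x) a = 0" using psd by (simp add: psd_matrix_def order_less_le)
    then have "Lam x *v a = 0" by (rule psd_matrix_quad_form_eq_0[OF psd symmetric_Lam])
    moreover have "block_part (blk k) 0 = 0" by (simp add: block_part_def vec_eq_iff)
    ultimately have "quad_form (Lam x) (block_part (blk k) a) = 0"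
      by (simp add: quad_form_def Lam_mult_block_part)
    moreover have "0 < quad_form (Lam x) (block_part (blk k) a)"
      unfolding inner_coordv_g_block_poly_square[symmetric]
      by (rule interior_Sig_dual_inner_pos[OF x _ coordv_g_block_poly_square_neq_0[OF \<open>a$k \<noteq> 0\<close>]])
        (auto simp: SigmaC_def deg_le_iff_block_poly intro!: imageI g_square_in_WSOS)
    ultimately show False by simp
  qed
qed

lemma interior_Sig_dual_iff_pd_Lam: "x \<in> interior Sig_dual \<longleftrightarrow> pd_matrix (Lam x)"
  using interior_Sig_dual_imp_pd_Lam pd_Lam_imp_interior_Sig_dual by blast

lemma Lam_adj_pd_in_interior_Sig: "pd_matrix M \<Longrightarrow> Lam_adj M \<in> interior Sig"
proof -
  assume "pd_matrix M"
  have "open (Lam_adj ` {X. pd_matrix X})"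
    by (rule open_surjective_linear_image[OF open_pd_matrices linear_Lam_adj surj_Lam_adj])
  moreover have "Lam_adj ` {X. pd_matrix X} \<subseteq> Sig"
  proof clarify
    fix X :: "real^'k^'k" assume "pd_matrix X"
    define Y where "Y = (1/2) *\<^sub>R (X + transpose X)"
    have "quad_form (transpose X) a = quad_form X a" for a
      unfolding quad_form_def transpose_matrix_vector by (metis dot_lmul_matrix inner_commute)
    then have "pd_matrix Y"
      using \<open>pd_matrix X\<close> by (simp add: pd_matrix_def Y_def quad_form_scaleR quad_form_add)
    moreover have "symmetric_matrix Y"
      by (simp add: Y_def symmetric_matrix_def transpose_def vec_eq_iff add.commute)
    ultimately have "Lam_adj Y \<in> Sig" using Lam_adj_psd_in_Sig pd_imp_psd_matrix by blast
    moreover have "Lam_adj Y = Lam_adj X"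
      by (simp add: Y_def Lam_adj_scaleR Lam_adj_add Lam_adj_transpose flip: scaleR_2)
    ultimately show "Lam_adj X \<in> Sig" by simp
  qed
  ultimately show ?thesis using \<open>pd_matrix M\<close> by (intro interiorI) auto
qed

section \<open>The barrier \<open>-ln det \<Lambda>\<close>\<close>

definition grad_map :: "real^'u \<Rightarrow> real^'u" where
  "grad_map y = Lam_adj (matrix_inv (Lam y))"

abbreviation Hess where "Hess \<equiv> hessM q g blk p"
abbreviation lnrm where "lnrm \<equiv> lnorm q g blk p"
abbreviation dnrm where "dnrm \<equiv> dnorm q g blk p"

lemma uminus_gradf: "- gradf q g blk p y = grad_map y"
  by (simp add: gradf_def grad_map_def)

lemma Hess_mult_vector: "Hess x *v w = hessf q g blk p x w"
proof -
  have "linear (hessf q g blk p x)"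
    by (rule linearI)
      (simp_all add: hessf_def Lam_add Lam_scaleR matrix_add_ldistrib matrix_add_rdistrib
        Lam_adj_add Lam_adj_scaleR)
  moreover have "Hess x = matrix (hessf q g blk p x)" by (simp add: hessM_def matrix_def)
  ultimately show ?thesis by (simp add: matrix_vector_mul(2))
qed

lemma inner_Hess: "w \<bullet> (Hess x *v v) = sandwich_inner (matrix_inv (Lam x)) (Lam v) (Lam w)"
  by (simp add: Hess_mult_vector hessf_def inner_commute[of w] inner_Lam_adj sandwich_inner_def)

lemma symmetric_Hess:
  assumes "pd_matrix (Lam x)"
  shows "symmetric_matrix (Hess x)"
proof -
  have "Hess x $ u $ v = Hess x $ v $ u" for u v
  proof -
    have "Hess x $ u $ v = axis u 1 \<bullet> (Hess x *v axis v 1)"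
      by (simp add: inner_axis' matrix_vector_mult_axis)
    also have "\<dots> = axis v 1 \<bullet> (Hess x *v axis u 1)"
      unfolding inner_Hess
      by (rule sandwich_inner_commute[OF symmetric_matrix_inv[OF assms symmetric_Lam]
            symmetric_Lam symmetric_Lam])
    also have "\<dots> = Hess x $ v $ u" by (simp add: inner_axis' matrix_vector_mult_axis)
    finally show ?thesis .
  qed
  then show ?thesis by (simp add: symmetric_matrix_def transpose_def vec_eq_iff)
qed

lemma pd_Hess:
  assumes "pd_matrix (Lam x)"
  shows "pd_matrix (Hess x)"
  unfolding pd_matrix_def
proof (intro allI impI)
  fix w :: "real^'u" assume "w \<noteq> 0"
  let ?X = "matrix_inv (Lam x)"
  have "psd_matrix ?X" "symmetric_matrix ?X"
    using pd_matrix_inv[OF assms symmetric_Lam] symmetric_matrix_inv[OF assms symmetric_Lam]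
    by (simp_all add: pd_imp_psd_matrix)
  then have "0 \<le> sandwich_inner ?X (Lam w) (Lam w)" by (rule sandwich_inner_nonneg)
  moreover have "sandwich_inner ?X (Lam w) (Lam w) \<noteq> 0"
    using sandwich_inner_eq_0_imp[OF assms symmetric_Lam symmetric_Lam] Lam_eq_0_imp \<open>w \<noteq> 0\<close>
    by blast
  ultimately show "0 < quad_form (Hess x) w" by (simp add: quad_form_def inner_Hess)
qed

lemma Hess_mult_self: "pd_matrix (Lam x) \<Longrightarrow> Hess x *v x = grad_map x"
  by (simp add: Hess_mult_vector hessf_def grad_map_def pd_matrix_mult_inv
      matrix_mul_assoc[symmetric])

lemma lnorm_nonneg: "pd_matrix (Lam x) \<Longrightarrow> 0 \<le> lnrm x v"
  using pd_imp_psd_matrix[OF pd_Hess] by (simp add: lnorm_def psd_matrix_def quad_form_def)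

lemma lnorm_square:
  assumes "pd_matrix (Lam x)"
  shows "(lnrm x v)^2 = sandwich_inner (matrix_inv (Lam x)) (Lam v) (Lam v)"
proof -
  have "0 \<le> quad_form (Hess x) v"
    using pd_imp_psd_matrix[OF pd_Hess[OF assms]] psd_matrix_def by blast
  then show ?thesis by (simp add: lnorm_def quad_form_def inner_Hess)
qed

lemma lnorm_eq_0_imp: "pd_matrix (Lam x) \<Longrightarrow> lnrm x v = 0 \<Longrightarrow> v = 0"
  using pd_Hess by (fastforce simp: lnorm_def pd_matrix_def quad_form_def)

lemma inner_le_dnorm_mult_lnorm:
  assumes "pd_matrix (Lam x)"
  shows "t \<bullet> w \<le> dnrm x t * lnrm x w"
proof -
  have pH: "pd_matrix (Hess x)" and sH: "symmetric_matrix (Hess x)"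
    using pd_Hess[OF assms] symmetric_Hess[OF assms] by auto
  define z where "z = matrix_inv (Hess x) *v t"
  have Hz: "Hess x *v z = t" by (simp add: z_def pd_matrix_inv_mult_vector[OF pH])
  have "t \<bullet> w = z \<bullet> (Hess x *v w)"
    by (simp add: Hz[symmetric] symmetric_matrix_inner_commute[OF sH, of z w] inner_commute)
  also have "\<dots> \<le> sqrt ((z \<bullet> (Hess x *v w))^2)" by simp
  also have "\<dots> \<le> sqrt (quad_form (Hess x) z * quad_form (Hess x) w)"
    by (rule real_sqrt_le_mono[OF psd_matrix_cauchy_schwarz[OF pd_imp_psd_matrix[OF pH] sH]])
  also have "quad_form (Hess x) z = t \<bullet> (matrix_inv (Hess x) *v t)"
    by (simp add: quad_form_def Hz) (simp add: z_def inner_commute)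
  also have "sqrt (t \<bullet> (matrix_inv (Hess x) *v t) * quad_form (Hess x) w) = dnrm x t * lnrm x w"
    by (simp add: dnorm_def lnorm_def hess_inv_app_def quad_form_def real_sqrt_mult)
  finally show ?thesis .
qed

lemma divide_one_plus_le_imp_le:
  fixes \<delta> r :: real
  assumes "\<delta> / (1 + \<delta>) \<le> r / (1 + r)" "0 \<le> \<delta>" "0 < r"
  shows "\<delta> \<le> r"
  using assms by (simp add: field_simps)

lemma lnorm_diff_le:
  assumes px: "pd_matrix (Lam x)" and py: "pd_matrix (Lam y)" and "0 < r"
    and dn: "dnrm x (grad_map y - grad_map x) \<le> r / (1 + r)"
  shows "lnrm x (x - y) \<le> r"
proof -
  define P Q where "P = Lam x" and "Q = Lam y"
  define b where "b = sandwich_inner (matrix_inv P) (Q - P) (Q - P)"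
  define \<delta> where "\<delta> = lnrm x (x - y)"
  have "0 \<le> \<delta>" unfolding \<delta>_def by (rule lnorm_nonneg[OF px])
  have "\<delta>^2 = sandwich_inner (matrix_inv P) (Lam (x - y)) (Lam (x - y))"
    by (simp add: \<delta>_def lnorm_square[OF px] P_def)
  also have "Lam (x - y) = - (Q - P)" by (simp add: P_def Q_def Lam_diff)
  finally have b: "b = \<delta>^2" by (simp only: sandwich_inner_uminus b_def)
  have "(grad_map y - grad_map x) \<bullet> (y - x) = (matrix_inv Q - matrix_inv P) \<bullet> (Q - P)"
    by (simp add: grad_map_def P_def Q_def Lam_diff inner_Lam_adj flip: Lam_adj_diff)
  also have "\<dots> \<le> - b / (1 + sqrt b)"
    unfolding b_def P_def Q_def by (rule inner_inv_diff_le[OF px symmetric_Lam py symmetric_Lam])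
  finally have "\<delta>^2 / (1 + \<delta>) \<le> (grad_map y - grad_map x) \<bullet> (x - y)"
    using \<open>0 \<le> \<delta>\<close> by (simp add: b inner_diff_right algebra_simps)
  also have "\<dots> \<le> dnrm x (grad_map y - grad_map x) * \<delta>"
    unfolding \<delta>_def by (rule inner_le_dnorm_mult_lnorm[OF px])
  also have "\<dots> \<le> r / (1 + r) * \<delta>" using dn \<open>0 \<le> \<delta>\<close> by (rule mult_right_mono)
  finally have ineq: "\<delta> * (\<delta> / (1 + \<delta>)) \<le> \<delta> * (r / (1 + r))"
    by (simp add: power2_eq_square mult_ac)
  show ?thesis
  proof (cases "\<delta> = 0")
    case True
    then show ?thesis using \<open>0 < r\<close> by (simp add: \<delta>_def)
  next
    case False
    then have "0 < \<delta>" using \<open>0 \<le> \<delta>\<close> by simp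
    then have "\<delta> / (1 + \<delta>) \<le> r / (1 + r)" using ineq by (rule mult_le_cancel_left_pos[THEN iffD1])
    then show ?thesis unfolding \<delta>_def[symmetric]
      by (rule divide_one_plus_le_imp_le[OF _ \<open>0 \<le> \<delta>\<close> \<open>0 < r\<close>])
  qed
qed

lemma pd_Lam_in_Dikin_ellipsoid:
  assumes px: "pd_matrix (Lam x)" and "0 < c" and "lnrm x v < c"
  shows "pd_matrix (Lam (c *\<^sub>R x + v))"
proof -
  have "sandwich_inner (matrix_inv (Lam x)) ((1/c) *\<^sub>R Lam v) ((1/c) *\<^sub>R Lam v) =
      (lnrm x v / c)^2"
    using lnorm_square[OF px, of v] by (simp add: sandwich_inner_def power2_eq_square)
  also have "\<dots> < 1"
  proof -
    have "0 \<le> lnrm x v / c" "lnrm x v / c < 1"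
      using lnorm_nonneg[OF px, of v] assms(2,3) by simp_all
    then show ?thesis by (simp add: abs_square_less_1)
  qed
  finally have "pd_matrix (Lam x + (1/c) *\<^sub>R Lam v)"
    by (intro pd_matrix_add_in_Dikin_ellipsoid[OF px symmetric_Lam])
      (simp_all add: symmetric_matrix_scaleR symmetric_Lam)
  then have "pd_matrix (c *\<^sub>R (Lam x + (1/c) *\<^sub>R Lam v))" using \<open>0 < c\<close> by (rule pd_matrix_scaleR)
  then show ?thesis using \<open>0 < c\<close> by (simp add: Lam_add Lam_scaleR scaleR_add_right)
qed

subsection \<open>The gradient map is a bijection onto \<open>\<Sigma>\<degree>\<close>\<close>

lemma isCont_grad_map: "pd_matrix (Lam y) \<Longrightarrow> isCont grad_map y"
  unfolding grad_map_def
  by (intro continuous_at_compose[unfolded o_def, OF isCont_Lam]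
      continuous_at_compose[unfolded o_def, OF isCont_matrix_inv] linear_continuous_at)
    (simp_all add: linear_Lam_adj linear_conv_bounded_linear[symmetric])

lemma grad_map_inj:
  assumes px: "pd_matrix (Lam x)" and py: "pd_matrix (Lam y)" and "grad_map x = grad_map y"
  shows "x = y"
proof -
  have le: "lnrm x (x - y) \<le> r" if "r > 0" for r
    by (rule lnorm_diff_le[OF px py that]) (use assms that in \<open>simp add: dnorm_def\<close>)
  have "lnrm x (x - y) = 0"
    using le[of "lnrm x (x - y) / 2"] lnorm_nonneg[OF px, of "x - y"] by fastforce
  then have "x - y = 0" by (rule lnorm_eq_0_imp[OF px])
  then show ?thesis by simp
qed

lemma grad_map_in_interior_Sig: "pd_matrix (Lam y) \<Longrightarrow> grad_map y \<in> interior Sig"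
  unfolding grad_map_def by (rule Lam_adj_pd_in_interior_Sig[OF pd_matrix_inv[OF _ symmetric_Lam]])

lemma inner_grad_map_self: "pd_matrix (Lam y) \<Longrightarrow> grad_map y \<bullet> y = real CARD('k)"
proof -
  assume py: "pd_matrix (Lam y)"
  have "grad_map y \<bullet> y = (matrix_inv (Lam y) ** Lam y) \<bullet> mat 1"
    by (simp add: grad_map_def inner_Lam_adj inner_matrix_mult_right
        symmetric_matrix_transpose[OF symmetric_Lam])
  also have "\<dots> = real CARD('k)"
    by (simp add: pd_matrix_mult_inv[OF py] inner_matrix_eq_sum mat_def
        if_distrib[of "\<lambda>z. z * _"] cong: if_cong)
  finally show ?thesis .
qed

lemma closed_Sig_dual: "closed Sig_dual"
proof -
  have "Sig_dual = (\<Inter>s\<in>Sig. {x. s \<bullet> x \<ge> 0})"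
    by (auto simp: SigmaD_def dual_cone_def inner_commute)
  then show ?thesis by (simp add: closed_INT closed_halfspace_ge)
qed

lemma norm_le_if_near_interior_Sig:
  assumes "ball s e \<subseteq> Sig" "e > 0" "dist s' s < e/2" "y \<in> Sig_dual"
  shows "(e/2) * norm y \<le> s' \<bullet> y"
proof (cases "y = 0")
  case False
  define z where "z = s' - ((e/2) / norm y) *\<^sub>R y"
  have "dist z s' = e/2" using False \<open>e > 0\<close> by (simp add: z_def dist_norm)
  then have "dist z s < e" using assms(3) dist_triangle[of z s s'] by linarith
  then have "z \<in> Sig" using assms(1) by (auto simp: dist_commute)
  then have "0 \<le> y \<bullet> z" by (rule Sig_dual_inner_nonneg[OF assms(4)])
  also have "y \<bullet> z = s' \<bullet> y - (e/2) * norm y"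
    using False
    by (simp add: z_def inner_diff_right inner_commute power2_norm_eq_inner[symmetric]
      power2_eq_square)
  finally show ?thesis by simp
qed simp

lemma quad_form_Lam_eq_inner: "quad_form (Lam v) a = Lam_adj (outer_prod a a) \<bullet> v"
  by (simp add: inner_Lam_adj inner_commute[of "outer_prod a a"] inner_outer_prod quad_form_def)

lemma pd_Lam_lim:
  assumes x0: "pd_matrix (Lam x0)" and y: "\<And>n. pd_matrix (Lam (y n))"
    and "y \<longlonglongrightarrow> l" and grad: "(\<lambda>n. grad_map (y n)) \<longlonglongrightarrow> s"
  shows "pd_matrix (Lam l)"
proof (rule ccontr)
  assume "\<not> pd_matrix (Lam l)"
  moreover have "l \<in> Sig_dual"
    using closed_sequentially[OF closed_Sig_dual _ \<open>y \<longlonglongrightarrow> l\<close>] y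
    by (simp add: Sig_dual_iff_psd_Lam pd_imp_psd_matrix)
  ultimately obtain a where "a \<noteq> 0" and "quad_form (Lam l) a = 0"
    by (auto simp: pd_matrix_def Sig_dual_iff_psd_Lam psd_matrix_def order_less_le)
  define w where "w = Lam_adj (outer_prod a a)"
  define t where "t = quad_form (matrix_inv (Lam x0)) a"
  have bound: "(a \<bullet> a)^2 \<le> (grad_map (y n) \<bullet> x0) * (t * (w \<bullet> y n))" for n
    using inner_matrix_inv_lower_bound[OF y symmetric_Lam x0 symmetric_Lam \<open>a \<noteq> 0\<close>]
    by (simp add: grad_map_def inner_Lam_adj t_def w_def quad_form_Lam_eq_inner)
  moreover have "(\<lambda>n. (grad_map (y n) \<bullet> x0) * (t * (w \<bullet> y n))) \<longlonglongrightarrow> (s \<bullet> x0) * (t * (w \<bullet> l))"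
    by (intro tendsto_intros grad \<open>y \<longlonglongrightarrow> l\<close>)
  moreover have "w \<bullet> l = 0"
    using \<open>quad_form (Lam l) a = 0\<close> by (simp add: w_def quad_form_Lam_eq_inner)
  ultimately have "(\<lambda>n. (grad_map (y n) \<bullet> x0) * (t * (w \<bullet> y n))) \<longlonglongrightarrow> 0" by simp
  then have "(a \<bullet> a)^2 \<le> 0" by (rule LIMSEQ_le_const) (use bound in blast)
  then show False using \<open>a \<noteq> 0\<close> by simp
qed

lemma grad_map_image_closed:
  assumes x0: "pd_matrix (Lam x0)" and "s \<in> interior Sig"
    and "s \<in> closure (grad_map ` interior Sig_dual)"
  shows "s \<in> grad_map ` interior Sig_dual"
proof -
  obtain z where "\<And>n. z n \<in> grad_map ` interior Sig_dual" and "z \<longlonglongrightarrow> s"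
    using assms(3) closure_sequential[of s] by blast
  then have "\<forall>n. \<exists>y. y \<in> interior Sig_dual \<and> grad_map y = z n" by (metis imageE)
  then obtain y where y: "\<And>n. y n \<in> interior Sig_dual" and "\<And>n. grad_map (y n) = z n"
    using choice[of "\<lambda>n y. y \<in> interior Sig_dual \<and> grad_map y = z n"] by blast
  with \<open>z \<longlonglongrightarrow> s\<close> have grad: "(\<lambda>n. grad_map (y n)) \<longlonglongrightarrow> s" by simp
  have pd: "pd_matrix (Lam (y n))" for n using y interior_Sig_dual_iff_pd_Lam by blast
  obtain e where "e > 0" and ball: "ball s e \<subseteq> Sig" using assms(2) mem_interior by blast
  then have "e/2 > 0" by simp
  then obtain N where N: "\<And>n. n \<ge> N \<Longrightarrow> dist (grad_map (y n)) s < e/2"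
    using grad unfolding lim_sequentially by blast
  have "norm (y (n + N)) \<le> 2 * real CARD('k) / e" for n
  proof -
    have "(e/2) * norm (y (n + N)) \<le> grad_map (y (n + N)) \<bullet> y (n + N)"
      using y interior_subset by (intro norm_le_if_near_interior_Sig[OF ball \<open>e > 0\<close> N]) auto
    also have "\<dots> = real CARD('k)" by (rule inner_grad_map_self[OF pd])
    finally show ?thesis using \<open>e > 0\<close> by (simp add: field_simps)
  qed
  then have bounded: "\<forall>n. y (n + N) \<in> cball 0 (2 * real CARD('k) / e)" by simp
  obtain l r where "strict_mono r" and "((\<lambda>n. y (n + N)) \<circ> r) \<longlonglongrightarrow> l"
    using seq_compactE[OF compact_imp_seq_compact[OF compact_cball] bounded] by blast
  then have lim: "(\<lambda>n. y (r n + N)) \<longlonglongrightarrow> l" by (simp add: o_def)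
  have "strict_mono (\<lambda>n. r n + N)" using \<open>strict_mono r\<close> by (simp add: strict_mono_def)
  then have grad_sub: "(\<lambda>n. grad_map (y (r n + N))) \<longlonglongrightarrow> s"
    using LIMSEQ_subseq_LIMSEQ[OF grad] by (simp add: o_def)
  have "pd_matrix (Lam l)" by (rule pd_Lam_lim[OF x0 pd lim grad_sub])
  then have "(\<lambda>n. grad_map (y (r n + N))) \<longlonglongrightarrow> grad_map l"
    using isCont_tendsto_compose[OF isCont_grad_map lim] by simp
  then have "grad_map l = s" using grad_sub by (rule LIMSEQ_unique)
  then show ?thesis using \<open>pd_matrix (Lam l)\<close> interior_Sig_dual_iff_pd_Lam by blast
qed

lemma grad_map_image:
  assumes x0: "pd_matrix (Lam x0)"
  shows "grad_map ` interior Sig_dual = interior Sig"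
proof -
  let ?T = "grad_map ` interior Sig_dual"
  have sub: "?T \<subseteq> interior Sig"
    using grad_map_in_interior_Sig interior_Sig_dual_iff_pd_Lam by blast
  have "continuous_on (interior Sig_dual) grad_map"
    by (intro continuous_at_imp_continuous_on ballI isCont_grad_map)
      (simp add: interior_Sig_dual_iff_pd_Lam)
  moreover have "inj_on grad_map (interior Sig_dual)"
    using grad_map_inj by (auto simp: inj_on_def interior_Sig_dual_iff_pd_Lam)
  ultimately have "open ?T" by (rule invariance_of_domain[OF _ open_interior])
  then have "openin (top_of_set (interior Sig)) ?T" using sub by (auto simp: openin_open)
  moreover have "closedin (top_of_set (interior Sig)) ?T"
    unfolding closedin_closed
    using sub closure_subset[of ?T] grad_map_image_closed[OF x0]
    by (intro exI[of _ "closure ?T"]) auto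
  moreover have "?T \<noteq> {}" using pd_Lam_imp_interior_Sig_dual[OF x0] by blast
  moreover have "connected (interior Sig)"
    by (rule convex_connected[OF convex_interior[OF convex_Sig]])
  ultimately show ?thesis unfolding connected_clopen by blast
qed

lemma grad_cert_is_preimage:
  assumes "pd_matrix (Lam x0)" "s \<in> interior Sig"
  shows "grad_cert q g d blk p s \<in> interior Sig_dual" "grad_map (grad_cert q g d blk p s) = s"
proof -
  obtain y where y: "y \<in> interior Sig_dual" "grad_map y = s"
    using assms grad_map_image by (metis imageE)
  have "grad_cert q g d blk p s = y"
    unfolding grad_cert_def uminus_gradf
  proof (rule the_equality)
    show "y \<in> interior Sig_dual \<and> grad_map y = s" using y by simp
    show "y' = y" if "y' \<in> interior Sig_dual \<and> grad_map y' = s" for y'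
      using that y grad_map_inj by (simp add: interior_Sig_dual_iff_pd_Lam)
  qed
  then show "grad_cert q g d blk p s \<in> interior Sig_dual" "grad_map (grad_cert q g d blk p s) = s"
    using y by simp_all
qed

lemma Sig_dual_scaleR: "y \<in> Sig_dual \<Longrightarrow> 0 \<le> c \<Longrightarrow> c *\<^sub>R y \<in> Sig_dual"
  by (simp add: SigmaD_def dual_cone_def)

lemma Hess_scaleR:
  assumes "pd_matrix (Lam x)" "c \<noteq> 0"
  shows "Hess (c *\<^sub>R x) = (1/c)^2 *\<^sub>R Hess x"
proof -
  have inv_scaleR: "matrix_inv (Lam (c *\<^sub>R x)) = (1/c) *\<^sub>R matrix_inv (Lam x)"
    using matrix_inv_scaleR[OF assms] by (simp add: Lam_scaleR)
  show ?thesis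
    unfolding hessM_def hessf_def inv_scaleR
      by (simp add: vec_eq_iff Lam_adj_scaleR power2_eq_square)
qed

lemma grad_map_scaleR:
  assumes "pd_matrix (Lam x)" "c \<noteq> 0"
  shows "grad_map (c *\<^sub>R x) = (1/c) *\<^sub>R grad_map x"
  using matrix_inv_scaleR[OF assms] by (simp add: grad_map_def Lam_scaleR Lam_adj_scaleR)

lemma dnorm_scaleR:
  assumes "pd_matrix (Lam x)" "c > 0"
  shows "dnrm ((1/c) *\<^sub>R x) t = dnrm x t / c"
proof -
  have "matrix_inv (Hess ((1/c) *\<^sub>R x)) = (1/c^2) *\<^sub>R matrix_inv (Hess x)"
    using Hess_scaleR[OF assms(1), of "1/c"] assms(2)
    by (simp add: matrix_inv_scaleR[OF pd_Hess[OF assms(1)]])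
  then show ?thesis
    using assms(2) by (simp add: dnorm_def hess_inv_app_def real_sqrt_mult real_sqrt_divide)
qed

subsection \<open>Certificates for \<open>t + c u\<close>\<close>

lemma eventually_in_certs:
  assumes x: "x \<in> interior Sig_dual" and u: "u \<in> interior (Pset q g d blk p x)"
  shows "\<exists>C. \<forall>c\<ge>C. x \<in> certs q g d blk p (t + c *\<^sub>R u)"
proof -
  obtain \<epsilon> where "\<epsilon> > 0" and ball: "ball u \<epsilon> \<subseteq> Pset q g d blk p x"
    using u mem_interior by blast
  define C where "C = 2 * norm t / \<epsilon> + 1"
  have "x \<in> certs q g d blk p (t + c *\<^sub>R u)" if "C \<le> c" for c
  proof -
    have "0 < C" using \<open>\<epsilon> > 0\<close> by (simp add: C_def add_nonneg_pos)
    then have "0 < c" using that by simp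
    have "\<epsilon> * C = 2 * norm t + \<epsilon>" using \<open>\<epsilon> > 0\<close> by (simp add: C_def field_simps)
    then have "norm t < \<epsilon> * C" using \<open>\<epsilon> > 0\<close> norm_ge_zero[of t] by linarith
    also have "\<dots> \<le> \<epsilon> * c" using that \<open>\<epsilon> > 0\<close> by simp
    finally have "u + (1/c) *\<^sub>R t \<in> ball u \<epsilon>" using \<open>0 < c\<close> by (simp add: dist_norm field_simps)
    then have "hess_inv_app q g blk p x (u + (1/c) *\<^sub>R t) \<in> Sig_dual"
      using ball by (auto simp: Pset_def)
    then have "c *\<^sub>R hess_inv_app q g blk p x (u + (1/c) *\<^sub>R t) \<in> Sig_dual"
      using \<open>0 < c\<close> by (simp add: Sig_dual_scaleR)
    moreover have "c *\<^sub>R hess_inv_app q g blk p x (u + (1/c) *\<^sub>R t) =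
        hess_inv_app q g blk p x (t + c *\<^sub>R u)"
      using \<open>0 < c\<close> by (simp add: hess_inv_app_def matrix_vector_right_distrib
          matrix_vector_mult_scaleR scaleR_add_right add.commute)
    ultimately show ?thesis using x by (simp add: certs_def)
  qed
  then show ?thesis by blast
qed

lemma Hess_mult_in_interior_Sig:
  assumes "pd_matrix (Lam x)" "pd_matrix (Lam w)"
  shows "Hess x *v w \<in> interior Sig"
  unfolding Hess_mult_vector hessf_def
  by (intro Lam_adj_pd_in_interior_Sig pd_matrix_congruence assms(2)
      pd_matrix_inv symmetric_matrix_inv assms(1) symmetric_Lam)

lemma Hess_inv_shift:
  assumes "pd_matrix (Lam x1)"
  shows "matrix_inv (Hess x1) *v (t + c *\<^sub>R grad_map x1) = c *\<^sub>R x1 + matrix_inv (Hess x1) *v t"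
  using pd_matrix_inv_mult_vector(2)[OF pd_Hess[OF assms], of x1]
  by (simp add: Hess_mult_self[OF assms, symmetric] matrix_vector_right_distrib
      matrix_vector_mult_scaleR add.commute)

lemma grad_cert_shift:
  assumes x0: "pd_matrix (Lam x0)" and u: "u \<in> interior Sig" and "0 < r" "0 < c"
  defines "x1 \<equiv> grad_cert q g d blk p u"
  assumes c: "(1 + r) / r * dnrm x1 t \<le> c"
  shows "t + c *\<^sub>R u \<in> interior Sig" "x1 \<in> certs q g d blk p (t + c *\<^sub>R u)"
    "lnrm ((1/c) *\<^sub>R x1) ((1/c) *\<^sub>R x1 - grad_cert q g d blk p (t + c *\<^sub>R u)) \<le> r"
proof -
  have px1: "pd_matrix (Lam x1)" and gx1: "grad_map x1 = u"
    using grad_cert_is_preimage[OF x0 u] interior_Sig_dual_iff_pd_Lam by (auto simp: x1_def)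
  define v where "v = matrix_inv (Hess x1) *v t"
  have "lnrm x1 v = dnrm x1 t"
    using pd_matrix_inv_mult_vector(1)[OF pd_Hess[OF px1], of t]
    by (simp add: lnorm_def dnorm_def hess_inv_app_def v_def inner_commute)
  also have dn: "dnrm x1 t \<le> c * (r / (1 + r))" using c \<open>0 < r\<close> by (simp add: field_simps)
  also have "\<dots> < c" using \<open>0 < c\<close> \<open>0 < r\<close> by (simp add: field_simps)
  finally have pd: "pd_matrix (Lam (c *\<^sub>R x1 + v))"
    by (rule pd_Lam_in_Dikin_ellipsoid[OF px1 \<open>0 < c\<close>])
  have shift: "hess_inv_app q g blk p x1 (t + c *\<^sub>R u) = c *\<^sub>R x1 + v"
    using Hess_inv_shift[OF px1] by (simp add: hess_inv_app_def v_def gx1)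
  show "x1 \<in> certs q g d blk p (t + c *\<^sub>R u)"
    using px1 pd by (simp add: certs_def shift interior_Sig_dual_iff_pd_Lam Sig_dual_iff_psd_Lam
        pd_imp_psd_matrix)
  have "t + c *\<^sub>R u = Hess x1 *v (c *\<^sub>R x1 + v)"
    using pd_matrix_inv_mult_vector(1)[OF pd_Hess[OF px1]] shift
    by (metis hess_inv_app_def)
  then show tcu: "t + c *\<^sub>R u \<in> interior Sig" using Hess_mult_in_interior_Sig[OF px1 pd] by simp
  define y where "y = grad_cert q g d blk p (t + c *\<^sub>R u)"
  have py: "pd_matrix (Lam y)" and gy: "grad_map y = t + c *\<^sub>R u"
    using grad_cert_is_preimage[OF x0 tcu] interior_Sig_dual_iff_pd_Lam by (auto simp: y_def)
  have "pd_matrix (Lam ((1/c) *\<^sub>R x1))"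
    using pd_matrix_scaleR[OF px1, of "1/c"] \<open>0 < c\<close> by (simp add: Lam_scaleR)
  moreover have "dnrm ((1/c) *\<^sub>R x1) (grad_map y - grad_map ((1/c) *\<^sub>R x1)) \<le> r / (1 + r)"
    using dn \<open>0 < c\<close> by (simp add: gy grad_map_scaleR[OF px1] gx1 dnorm_scaleR[OF px1] field_simps)
  ultimately show "lnrm ((1/c) *\<^sub>R x1) ((1/c) *\<^sub>R x1 - y) \<le> r"
    using lnorm_diff_le[OF _ py \<open>0 < r\<close>] by blast
qed

end

theorem lemma3:
  fixes g :: "'i::finite \<Rightarrow> 'v::finite mpoly" and d :: "'i \<Rightarrow> nat"
    and q :: "'u::finite \<Rightarrow> 'v mpoly"
    and blk :: "'k::finite \<Rightarrow> 'i" and p :: "'k \<Rightarrow> 'v mpoly"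
    and x :: "real^'u" and r :: real
  assumes g_nz: "\<forall>i. g i \<noteq> 0"
    and q_basis: "is_basis_of q UNIV (Vspace g d)"
    and p_basis: "\<forall>i. is_basis_of p {k. blk k = i} {h. deg_le (d i) h}"
    and proper: "proper_cone (SigmaC q g d)"
    and one_int: "coordv q 1 \<in> interior (SigmaC q g d)"
    and x_int: "x \<in> interior (SigmaD q g d)"
    and one_P: "coordv q 1 \<in> interior (Pset q g d blk p x)"
    and r_pos: "0 < r" and r_le: "r \<le> 1/2"
  shows "\<forall>t. (\<exists>C. \<forall>c\<ge>C. x \<in> certs q g d blk p (t + c *\<^sub>R coordv q 1)) \<and>
           (let x1 = grad_cert q g d blk p (coordv q 1) in
            \<forall>c>0. c \<ge> (1 + r) / r * dnorm q g blk p x1 t \<longrightarrow>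
              t + c *\<^sub>R coordv q 1 \<in> interior (SigmaC q g d) \<and>
              x1 \<in> certs q g d blk p (t + c *\<^sub>R coordv q 1) \<and>
              lnorm q g blk p ((1/c) *\<^sub>R x1)
                 ((1/c) *\<^sub>R x1 - grad_cert q g d blk p (t + c *\<^sub>R coordv q 1)) \<le> r)"
proof -
  interpret wsos_barrier g d q blk p
    using g_nz q_basis p_basis proper by unfold_locales
  have "pd_matrix (Lam x)" using x_int interior_Sig_dual_iff_pd_Lam by blast
  then show ?thesis
    using eventually_in_certs[OF x_int one_P] grad_cert_shift[OF _ one_int r_pos]
    by (simp add: Let_def)
qed

end
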